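(* Let $w$ satisfy (A1), fix $\delta\in(0,1/2)$, and suppose that (A2) holds, i.e. $a_\delta(x)\ge \int_0^1 \widetilde w_\delta(x,y)\,dy$ for all $x\in\Omega$. Then the comparison operator $\widetilde{\mathcal P}_\delta:L^2(\Omega)\to L^2(\Omega)$ is invertible and there is a constant $C=C(w,\delta)>0$ with $\|(\widetilde{\mathcal P}_\delta)^{-1}\|_{L^2\to L^2}\le C$.
   Context: Throughout, $\Omega=(0,1)$, $\delta\in(0,1/2)$ is the nonlocal horizon, $B_\delta(x)=(x-\delta,x+\delta)$, and $\chi_A$ denotes the indicator function of a set $A$. A function $w:[0,\infty)\to[0,\infty)$ satisfies (A1) if $w$ is continuous and nonincreasing on $[0,1)$, positive on $(0,1)$, $w(r)=0$ for $r\ge 1$, and $\int_{\mathbb R} w(|z|)|z|^2\,dz=2$. Set $w_\delta(x,y)=\delta^{-3}w(|x-y|/\delta)$, $a_\delta(x)=\int_0^1 w_\delta(x,y)\,dy$, and $b_\delta(x)=\frac{2}{(x+\delta)^2}\int_{x-\delta}^{0}(x-y)w_\delta(x,y)\,dy$ for $x\in(0,\delta)$, $b_\delta(x)=\frac{2}{(1-x+\delta)^2}\int_{1}^{x+\delta}(y-x)w_\delta(x,y)\,dy$ for $x\in(1-\delta,1)$, and $b_\delta(x)=0$ otherwise. Define $\widetilde w_\delta(x,y)=|w_\delta(x,y)-b_\delta(x)\chi_{(0,\delta)}(|y-x|)|$ and the comparison operator $\widetilde{\mathcal P}_\delta u(x)=a_\delta(x)u(x)-\int_0^1 u(y)\widetilde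 w_\delta(x,y)\,dy$ on $L^2(\Omega)$. *)

theory Defs
  imports "HOL-Analysis.Analysis"
begin

definition A1 :: "(real \<Rightarrow> real) \<Rightarrow> bool" where
  "A1 w \<longleftrightarrow>
     (\<forall>r\<ge>0. w r \<ge> 0) \<and>
     continuous_on {0..<1} w \<and>
     (\<forall>r s. 0 \<le> r \<and> r \<le> s \<and> s < 1 \<longrightarrow> w s \<le> w r) \<and>
     (\<forall>r. 0 < r \<and> r < 1 \<longrightarrow> w r > 0) \<and>
     (\<forall>r\<ge>1. w r = 0) \<and>
     has_bochner_integral lborel (\<lambda>z. w \<bar>z\<bar> * z\<^sup>2) 2"

definition w_d :: "(real \<Rightarrow> real) \<Rightarrow> real \<Rightarrow> real \<Rightarrow> real \<Rightarrow> real" where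
  "w_d w \<delta> x y = w (\<bar>x - y\<bar> / \<delta>) / \<delta> ^ 3"

definition a_d :: "(real \<Rightarrow> real) \<Rightarrow> real \<Rightarrow> real \<Rightarrow> real" where
  "a_d w \<delta> x = (LINT y:{0<..<1}|lborel. w_d w \<delta> x y)"

definition b_d :: "(real \<Rightarrow> real) \<Rightarrow> real \<Rightarrow> real \<Rightarrow> real" where
  "b_d w \<delta> x =
     (if 0 < x \<and> x < \<delta> then
        2 / (x + \<delta>)\<^sup>2 * (LBINT y = x - \<delta>..0. (x - y) * w_d w \<delta> x y)
      else if 1 - \<delta> < x \<and> x < 1 then
        2 / (1 - x + \<delta>)\<^sup>2 * (LBINT y = 1..x + \<delta>. (y - x) * w_d w \<delta> x y)
      else 0)"

definition wt_d :: "(real \<Rightarrow> real) \<Rightarrow> real \<Rightarrow> real \<Rightarrow> real \<Rightarrow> real" where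
  "wt_d w \<delta> x y =
     \<bar>w_d w \<delta> x y - b_d w \<delta> x * indicator {0<..<\<delta>} \<bar>y - x\<bar>\<bar>"

definition Pt :: "(real \<Rightarrow> real) \<Rightarrow> real \<Rightarrow> (real \<Rightarrow> real) \<Rightarrow> real \<Rightarrow> real" where
  "Pt w \<delta> u x = a_d w \<delta> x * u x - (LINT y:{0<..<1}|lborel. u y * wt_d w \<delta> x y)"

abbreviation Om :: "real measure" where
  "Om \<equiv> restrict_space lborel {0<..<1}"

definition L2 :: "(real \<Rightarrow> real) \<Rightarrow> bool" where
  "L2 u \<longleftrightarrow> u \<in> borel_measurable Om \<and> integrable Om (\<lambda>x. (u x)\<^sup>2)"

definition L2norm :: "(real \<Rightarrow> real) \<Rightarrow> real" where
  "L2norm u = sqrt (\<integral>x. (u x)\<^sup>2 \<partial>Om)"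

end

theory Submission
  imports Defs
begin

text \<open>With \<open>T u x = (\<integral> wt x y u y dy) / a x\<close> the comparison operator factors as
  \<open>Pt u = a (u - T u)\<close>, and (A2) says that the positive operator \<open>T\<close> satisfies \<open>T 1 \<le> 1\<close>.
  The defect \<open>a - \<integral> wt\<close> is strictly positive on \<open>[\<delta>/2, 3\<delta>/4]\<close>; since \<open>wt\<close> is bounded below
  near the diagonal in the interior, the gap \<open>1 - T\<^sup>k 1\<close> spreads from there over the interior
  within \<open>\<lceil>4/\<delta>\<rceil>\<close> steps, and in one more step into the boundary layers, where the size of
  the correction \<open>b\<close> forces either a defect or mass of \<open>wt\<close> reaching the interior. Hence
  \<open>T\<^sup>m 1 \<le> \<rho> < 1\<close> for a fixed \<open>m\<close>, and the Neumann series of \<open>T\<close> converges in the sup norm.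
  As \<open>T\<close> maps \<open>L\<^sup>2\<close> boundedly into \<open>L\<^sup>\<infinity>\<close> and \<open>a\<close> is bounded below, writing
  \<open>u = Pt u / a + T u\<close> gives solvability, uniqueness and the bound \<open>\<parallel>u\<parallel> \<le> C \<parallel>Pt u\<parallel>\<close>.\<close>

lemma space_Om [simp]: "space Om = {0<..<1}"
  by (simp add: space_restrict_space)

lemma set_integral_eq_integral_Om:
  "(LINT y:{0<..<1}|lborel. f y) = (\<integral>y. f y \<partial>Om)" for f :: "real \<Rightarrow> real"
  using integral_restrict_space[of "{0<..<1}" lborel f] by (simp add: set_lebesgue_integral_def)

lemma integral_Om_eq_lborel:
  "(\<integral>y. f y \<partial>Om) = (\<integral>y. indicator {0<..<1} y * f y \<partial>lborel)" for f :: "real \<Rightarrow> real"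
  by (subst integral_restrict_space) auto

lemma integrable_Om_bounded:
  fixes f :: "real \<Rightarrow> real"
  assumes "f \<in> borel_measurable borel" "\<And>y. y \<in> {0<..<1} \<Longrightarrow> \<bar>f y\<bar> \<le> B"
  shows "integrable Om f"
proof -
  interpret finite_measure Om
    by (rule finite_measureI) (simp add: emeasure_restrict_space)
  show ?thesis
    by (rule integrable_const_bound[where B=B]) (use assms in \<open>auto intro!: measurable_restrict_space1\<close>)
qed

lemma integrable_Om_const [simp]: "integrable Om (\<lambda>_. c :: real)"
  by (rule integrable_Om_bounded[where B="\<bar>c\<bar>"]) auto

lemma integral_Om_mono_bounded:
  fixes f g :: "real \<Rightarrow> real"
  assumes "f \<in> borel_measurable borel" "\<And>y. y \<in> {0<..<1} \<Longrightarrow> \<bar>f y\<bar> \<le> B"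
    and "g \<in> borel_measurable borel" "\<And>y. y \<in> {0<..<1} \<Longrightarrow> \<bar>g y\<bar> \<le> B'"
    and "\<And>y. y \<in> {0<..<1} \<Longrightarrow> f y \<le> g y"
  shows "(\<integral>y. f y \<partial>Om) \<le> (\<integral>y. g y \<partial>Om)"
  by (rule integral_mono[OF integrable_Om_bounded[OF assms(1,2)] integrable_Om_bounded[OF assms(3,4)]])
     (use assms(5) in auto)

lemma integral_Om_indicator:
  assumes "S \<subseteq> {0<..<1}" "S \<in> sets borel"
  shows "(\<integral>y. indicator S y * c \<partial>Om) = c * measure lborel S"
proof -
  have "(\<integral>y. indicator S y * c \<partial>Om) = measure Om (S \<inter> {0<..<1}) * c"
    by simp
  also have "S \<inter> {0<..<1} = S"
    using assms by auto
  also have "measure Om S = measure lborel S"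
    by (rule measure_restrict_space) (use assms in auto)
  finally show ?thesis by simp
qed

lemma measure_Om_space [simp]: "measure Om {0<..<1} = 1"
  by (subst measure_restrict_space) auto

lemma lborel_integral_reflect: "(\<integral>y. f y \<partial>lborel) = (\<integral>y. f (1 - y) \<partial>lborel)" for f :: "real \<Rightarrow> real"
  using lborel_integral_real_affine[of "-1" f 1] by simp

lemma integral_Om_reflect: "(\<integral>y. f y \<partial>Om) = (\<integral>y. f (1 - y) \<partial>Om)" for f :: "real \<Rightarrow> real"
proof -
  have "(\<integral>y. f y \<partial>Om) = (\<integral>y. indicator {0<..<1} (1 - y) * f (1 - y) \<partial>lborel)"
    unfolding integral_Om_eq_lborel by (rule lborel_integral_reflect)
  also have "\<dots> = (\<integral>y. f (1 - y) \<partial>Om)"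
    unfolding integral_Om_eq_lborel
    by (intro Bochner_Integration.integral_cong) (auto split: split_indicator)
  finally show ?thesis .
qed

lemma integrable_indicator_Icc_bounded:
  fixes f :: "real \<Rightarrow> real"
  assumes "f \<in> borel_measurable borel" "\<And>y. y \<in> {p..q} \<Longrightarrow> \<bar>f y\<bar> \<le> B"
  shows "integrable lborel (\<lambda>y. indicator {p..q} y * f y)"
proof (rule Bochner_Integration.integrable_bound)
  show "integrable lborel (\<lambda>y. indicator {p..q} y * \<bar>B\<bar>)"
    by (intro integrable_mult_left integrable_real_indicator) (auto simp: emeasure_lborel_Icc_eq)
  show "(\<lambda>y. indicator {p..q} y * f y) \<in> borel_measurable lborel"
    using assms(1) by measurable
  show "AE x in lborel. norm (indicator {p..q} x * f x) \<le> norm (indicator {p..q} x * \<bar>B\<bar>)"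
    using assms(2) by (auto split: split_indicator intro!: always_eventually) (meson abs_ge_self order_trans)
qed

lemma integral_Icc_mono_bounded:
  fixes f g :: "real \<Rightarrow> real"
  assumes "f \<in> borel_measurable borel" "\<And>y. y \<in> {p..q} \<Longrightarrow> \<bar>f y\<bar> \<le> B"
    and "g \<in> borel_measurable borel" "\<And>y. y \<in> {p..q} \<Longrightarrow> \<bar>g y\<bar> \<le> B'"
    and "\<And>y. y \<in> {p..q} \<Longrightarrow> f y \<le> g y"
  shows "(\<integral>y. indicator {p..q} y * f y \<partial>lborel) \<le> (\<integral>y. indicator {p..q} y * g y \<partial>lborel)"
  by (rule integral_mono[OF integrable_indicator_Icc_bounded[OF assms(1,2)]
        integrable_indicator_Icc_bounded[OF assms(3,4)]])
     (use assms(5) in \<open>auto split: split_indicator\<close>)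

lemma integral_Icc_linear:
  fixes p q c K :: real
  assumes "p \<le> q"
  shows "(\<integral>y. indicator {p..q} y * ((c - y) * K) \<partial>lborel) = K * (c * (q - p) - (q\<^sup>2 - p\<^sup>2) / 2)"
proof -
  have F: "(LBINT y=p..q. c - y) = (c * q - q\<^sup>2 / 2) - (c * p - p\<^sup>2 / 2)"
    by (rule interval_integral_FTC_finite)
       (auto intro!: continuous_intros derivative_eq_intros
             simp: has_real_derivative_iff_has_vector_derivative[symmetric])
  have "(\<integral>y. indicator {p..q} y * ((c - y) * K) \<partial>lborel) = K * (LBINT y=p..q. c - y)"
    using assms by (simp add: interval_integral_Icc set_lebesgue_integral_def ac_simps)
  also have "\<dots> = K * (c * (q - p) - (q\<^sup>2 - p\<^sup>2) / 2)"
    unfolding F by (simp add: field_simps)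
  finally show ?thesis .
qed

text \<open>Elements of \<open>L2\<close> are only measurable on \<open>Om\<close>; the operators below are
  easier to handle on Borel functions of the whole line, which agree with them on \<open>{0<..<1}\<close>.\<close>

definition L2_borel :: "(real \<Rightarrow> real) \<Rightarrow> bool" where
  "L2_borel g \<longleftrightarrow> g \<in> borel_measurable borel \<and> integrable Om (\<lambda>y. (g y)\<^sup>2)"

definition bounded_borel :: "(real \<Rightarrow> real) \<Rightarrow> bool" where
  "bounded_borel g \<longleftrightarrow> g \<in> borel_measurable borel \<and> (\<exists>B. \<forall>y\<in>{0<..<1}. \<bar>g y\<bar> \<le> B)"

lemma L2_borel_integrable:
  assumes "L2_borel g"
  shows "integrable Om g"
proof (rule Bochner_Integration.integrable_bound)
  have "integrable Om (\<lambda>y. 1::real)"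
    by (rule integrable_Om_bounded[where B=1]) auto
  then show "integrable Om (\<lambda>y. 1 + (g y)\<^sup>2)"
    using assms by (auto simp: L2_borel_def)
  show "g \<in> borel_measurable Om"
    using assms by (auto simp: L2_borel_def intro: measurable_restrict_space1)
  have "\<bar>t\<bar> \<le> 1 + t\<^sup>2" for t :: real
  proof (cases "\<bar>t\<bar> \<le> 1")
    case False
    then have "\<bar>t\<bar> * 1 \<le> \<bar>t\<bar> * \<bar>t\<bar>"
      by (intro mult_left_mono) auto
    then show ?thesis
      by (simp add: power2_eq_square)
  qed (simp add: add_increasing2)
  then show "AE x in Om. norm (g x) \<le> norm (1 + (g x)\<^sup>2)"
    by (intro always_eventually allI) simp
qed

lemma L2_borel_mult_bounded:
  assumes "L2_borel h" "c \<in> borel_measurable borel" "\<And>y. y \<in> {0<..<1} \<Longrightarrow> \<bar>c y\<bar> \<le> C"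
  shows "L2_borel (\<lambda>y. c y * h y)"
proof -
  have [measurable]: "h \<in> borel_measurable borel" "c \<in> borel_measurable borel"
    using assms(1,2) by (simp_all add: L2_borel_def)
  have "integrable Om (\<lambda>y. (c y * h y)\<^sup>2)"
  proof (rule Bochner_Integration.integrable_bound)
    show "integrable Om (\<lambda>y. C\<^sup>2 * (h y)\<^sup>2)"
      using assms(1) by (auto simp: L2_borel_def)
    show "(\<lambda>y. (c y * h y)\<^sup>2) \<in> borel_measurable Om"
      by (intro measurable_restrict_space1) measurable
    show "AE y in Om. norm ((c y * h y)\<^sup>2) \<le> norm (C\<^sup>2 * (h y)\<^sup>2)"
    proof (rule AE_I2)
      fix y assume "y \<in> space Om"
      then have "\<bar>c y\<bar>\<^sup>2 \<le> C\<^sup>2"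
        using assms(3) by (intro power_mono) auto
      then show "norm ((c y * h y)\<^sup>2) \<le> norm (C\<^sup>2 * (h y)\<^sup>2)"
        by (simp add: power_mult_distrib mult_right_mono)
    qed
  qed
  then show ?thesis
    by (simp add: L2_borel_def)
qed

lemma L2_borel_cmult: "L2_borel g \<Longrightarrow> L2_borel (\<lambda>y. c * g y)"
  by (auto simp: L2_borel_def power_mult_distrib)

lemma power2_sum_le: "(p + q)\<^sup>2 \<le> 2 * p\<^sup>2 + 2 * q\<^sup>2" for p q :: real
  using zero_le_power2[of "p - q"] by (simp add: power2_eq_square algebra_simps)

lemma L2_borel_add:
  assumes "L2_borel g" "L2_borel h"
  shows "L2_borel (\<lambda>y. g y + h y)"
proof -
  have "integrable Om (\<lambda>y. (g y + h y)\<^sup>2)"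
  proof (rule Bochner_Integration.integrable_bound)
    show "integrable Om (\<lambda>y. 2 * (g y)\<^sup>2 + 2 * (h y)\<^sup>2)"
      using assms by (auto simp: L2_borel_def)
    show "(\<lambda>y. (g y + h y)\<^sup>2) \<in> borel_measurable Om"
      using assms by (auto simp: L2_borel_def intro: measurable_restrict_space1)
    show "AE x in Om. norm ((g x + h x)\<^sup>2) \<le> norm (2 * (g x)\<^sup>2 + 2 * (h x)\<^sup>2)"
      using power2_sum_le by (intro always_eventually allI) simp
  qed
  then show ?thesis
    using assms by (auto simp: L2_borel_def)
qed

lemma L2_borel_diff: "L2_borel g \<Longrightarrow> L2_borel h \<Longrightarrow> L2_borel (\<lambda>y. g y - h y)"
  using L2_borel_add[of g "\<lambda>y. -1 * h y"] L2_borel_cmult[of h "-1"] by simp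

lemma L2_borel_abs: "L2_borel g \<Longrightarrow> L2_borel (\<lambda>y. \<bar>g y\<bar>)"
  by (auto simp: L2_borel_def)

lemma bounded_borel_const: "bounded_borel (\<lambda>_. c)"
  by (auto simp: bounded_borel_def)

lemma bounded_borel_L2_borel:
  assumes "bounded_borel g"
  shows "L2_borel g"
proof -
  obtain B where B: "\<forall>y\<in>{0<..<1}. \<bar>g y\<bar> \<le> B" and [measurable]: "g \<in> borel_measurable borel"
    using assms by (auto simp: bounded_borel_def)
  have "integrable Om (\<lambda>y. (g y)\<^sup>2)"
  proof (rule integrable_Om_bounded[where B="B\<^sup>2"])
    fix y :: real assume "y \<in> {0<..<1}"
    then have "\<bar>g y\<bar>\<^sup>2 \<le> B\<^sup>2"
      using B by (intro power_mono) auto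
    then show "\<bar>(g y)\<^sup>2\<bar> \<le> B\<^sup>2"
      by simp
  qed measurable
  then show ?thesis
    by (simp add: L2_borel_def)
qed

lemma L2_borel_representative:
  assumes "L2 u"
  obtains h where "L2_borel h" "\<And>y. y \<in> {0<..<1} \<Longrightarrow> h y = u y"
proof -
  have um: "u \<in> borel_measurable Om" and ui: "integrable Om (\<lambda>x. (u x)\<^sup>2)"
    using assms by (auto simp: L2_def)
  define h where "h y = indicator {0<..<1} y * u y" for y :: real
  have "(\<lambda>x. indicator {0<..<1} x *\<^sub>R u x) \<in> borel_measurable lborel"
    using um by (subst (asm) borel_measurable_restrict_space_iff) auto
  then have "h \<in> borel_measurable borel"
    unfolding h_def by (simp add: measurable_lborel1 cong: measurable_cong_sets)
  moreover have "integrable Om (\<lambda>x. (h x)\<^sup>2)"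
    using ui by (rule Bochner_Integration.integrable_cong[THEN iffD1, rotated -1]) (auto simp: h_def)
  ultimately show ?thesis
    using that[of h] by (auto simp: L2_borel_def h_def)
qed

lemma L2_if_L2_borel_on_Om:
  assumes "L2_borel h" "\<And>y. y \<in> {0<..<1} \<Longrightarrow> f y = h y"
  shows "L2 f"
proof -
  have "h \<in> borel_measurable Om"
    using assms(1) by (auto simp: L2_borel_def intro: measurable_restrict_space1)
  then have "f \<in> borel_measurable Om"
    by (rule measurable_cong[THEN iffD1, rotated]) (use assms(2) in auto)
  moreover have "integrable Om (\<lambda>x. (f x)\<^sup>2)"
    using assms(1) unfolding L2_borel_def
    by (intro Bochner_Integration.integrable_cong[THEN iffD1, OF refl _ conjunct2]) (use assms(2) in auto)
  ultimately show ?thesis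
    by (simp add: L2_def)
qed

lemma L2norm_cong: "(\<And>y. y \<in> {0<..<1} \<Longrightarrow> f y = h y) \<Longrightarrow> L2norm f = L2norm h"
  unfolding L2norm_def by (metis (no_types, lifting) Bochner_Integration.integral_cong space_Om)

lemma integral_abs_le_sqrt_integral_square:
  assumes "L2_borel p"
  shows "(\<integral>y. \<bar>p y\<bar> \<partial>Om) \<le> sqrt (\<integral>y. (p y)\<^sup>2 \<partial>Om)"
proof -
  define m where "m = (\<integral>y. \<bar>p y\<bar> \<partial>Om)"
  have [simp]: "integrable Om (\<lambda>y. (p y)\<^sup>2)" "integrable Om (\<lambda>y. \<bar>p y\<bar>)"
      "integrable Om (\<lambda>y. m\<^sup>2)"
    using assms L2_borel_integrable[OF assms] by (auto simp: L2_borel_def intro: integrable_Om_bounded)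
  text \<open>\<open>Om\<close> has measure one, so the integral of \<open>(\<bar>p\<bar> - m)\<^sup>2\<close> is a variance.\<close>
  have "0 \<le> (\<integral>y. (\<bar>p y\<bar> - m)\<^sup>2 \<partial>Om)"
    by simp
  also have "(\<integral>y. (\<bar>p y\<bar> - m)\<^sup>2 \<partial>Om) = (\<integral>y. (p y)\<^sup>2 + (m\<^sup>2 - 2 * m * \<bar>p y\<bar>) \<partial>Om)"
    by (intro Bochner_Integration.integral_cong) (auto simp: power2_eq_square algebra_simps)
  also have "\<dots> = (\<integral>y. (p y)\<^sup>2 \<partial>Om) + (\<integral>y. m\<^sup>2 - 2 * m * \<bar>p y\<bar> \<partial>Om)"
    by (intro Bochner_Integration.integral_add) auto
  also have "(\<integral>y. m\<^sup>2 - 2 * m * \<bar>p y\<bar> \<partial>Om) = m\<^sup>2 - 2 * m * m"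
    by (subst Bochner_Integration.integral_diff)
       (auto simp: m_def[symmetric])
  finally show ?thesis
    unfolding m_def[symmetric] by (simp add: real_le_rsqrt power2_eq_square)
qed

lemma summable_power_div:
  fixes \<rho> :: real
  assumes "0 < m" "1/2 \<le> \<rho>" "\<rho> < 1"
  shows "summable (\<lambda>i::nat. \<rho> ^ (i div m))"
proof -
  define s where "s = root m \<rho>"
  have s: "0 < s" "s < 1" "s ^ m = \<rho>"
    using assms by (simp_all add: s_def real_root_gt_zero)
  have bound: "\<rho> ^ (i div m) \<le> s ^ i / s ^ m" for i
  proof -
    have "i \<le> m * (i div m) + m"
      using assms(1) by (metis add_le_cancel_left div_mult_mod_eq less_imp_le mod_less_divisor mult.commute)
    then have "s ^ (m * (i div m) + m) \<le> s ^ i"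
      using s by (intro power_decreasing) auto
    then have "s ^ (m * (i div m)) \<le> s ^ i / s ^ m"
      using s(1) by (simp add: power_add pos_le_divide_eq)
    then show ?thesis
      by (simp add: power_mult s(3))
  qed
  have "summable (\<lambda>i. s ^ i / s ^ m)"
    using s by (intro summable_divide summable_geometric) simp
  then show ?thesis
    by (rule summable_comparison_test') (use bound assms in simp)
qed

section \<open>The kernels\<close>

locale nonlocal_comparison =
  fixes w :: "real \<Rightarrow> real" and \<delta> :: real
  assumes A1: "A1 w" and dpos: "0 < \<delta>" and dlt: "\<delta> < 1/2"
    and A2: "\<forall>x\<in>{0<..<1}. a_d w \<delta> x \<ge> (LINT y:{0<..<1}|lborel. wt_d w \<delta> x y)"
begin

lemma w_nonneg: "r \<ge> 0 \<Longrightarrow> w r \<ge> 0"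
  using A1 by (auto simp: A1_def)

lemma w_cont: "continuous_on {0..<1} w"
  using A1 by (auto simp: A1_def)

lemma w_zero: "r \<ge> 1 \<Longrightarrow> w r = 0"
  using A1 by (auto simp: A1_def)

lemma w_pos: "0 < r \<Longrightarrow> r < 1 \<Longrightarrow> 0 < w r"
  using A1 by (auto simp: A1_def)

lemma w_mono:
  assumes "0 \<le> r" "r \<le> s"
  shows "w s \<le> w r"
proof (cases "s < 1")
  case True then show ?thesis using A1 assms by (auto simp: A1_def)
next
  case False then show ?thesis using w_zero[of s] w_nonneg[of r] assms by auto
qed

lemma w_abs_measurable: "(\<lambda>r. w \<bar>r\<bar>) \<in> borel_measurable borel"
proof -
  have eq: "(\<lambda>r. w \<bar>r\<bar>) = (\<lambda>r. if r \<in> {-1<..<1} then w \<bar>r\<bar> else 0)"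
    by (auto simp: w_zero fun_eq_iff)
  have c: "continuous_on {-1<..<1} (\<lambda>r. w \<bar>r\<bar>)"
    by (rule continuous_on_compose2[OF w_cont]) (auto intro!: continuous_intros)
  have "(\<lambda>r. if r \<in> {-1<..<1} then w \<bar>r\<bar> else 0) \<in> borel_measurable borel"
    by (rule borel_measurable_continuous_on_if[OF _ c]) (auto intro: continuous_on_const)
  then show ?thesis using eq by simp
qed

abbreviation W where "W \<equiv> w_d w \<delta>"
abbreviation b where "b \<equiv> b_d w \<delta>"
abbreviation wt where "wt \<equiv> wt_d w \<delta>"
abbreviation a where "a \<equiv> a_d w \<delta>"

lemma W_eq: "W x y = w \<bar>(x - y) / \<delta>\<bar> / \<delta> ^ 3"
  using dpos by (simp add: w_d_def abs_divide)

lemma W_measurable_pair[measurable]: "(\<lambda>(x,y). W x y) \<in> borel_measurable (lborel \<Otimes>\<^sub>M lborel)"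
  unfolding W_eq using w_abs_measurable by measurable

lemma W_measurable[measurable]: "W x \<in> borel_measurable borel"
  unfolding W_eq using w_abs_measurable by measurable

lemma W_nonneg: "W x y \<ge> 0"
  unfolding W_eq using dpos w_nonneg by simp

lemma W_le_w0: "W x y \<le> w 0 / \<delta>^3"
  unfolding W_eq using dpos w_mono[of 0 "\<bar>(x - y) / \<delta>\<bar>"] by (simp add: divide_right_mono)

lemma W_outside_horizon: "\<bar>x - y\<bar> \<ge> \<delta> \<Longrightarrow> W x y = 0"
  unfolding W_eq using dpos by (simp add: w_zero abs_divide)

lemma W_ge_scaled:
  assumes "\<bar>x - y\<bar> \<le> c * \<delta>" "0 \<le> c"
  shows "W x y \<ge> w c / \<delta>^3"
proof -
  have "\<bar>(x - y) / \<delta>\<bar> \<le> c" using assms dpos by (simp add: abs_divide pos_divide_le_eq)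
  then show ?thesis unfolding W_eq using dpos w_mono[of "\<bar>(x - y) / \<delta>\<bar>" c]
    by (simp add: divide_right_mono)
qed

lemma W_le_scaled:
  assumes "\<bar>x - y\<bar> \<ge> c * \<delta>" "0 \<le> c"
  shows "W x y \<le> w c / \<delta>^3"
proof -
  have "\<bar>(x - y) / \<delta>\<bar> \<ge> c" using assms dpos by (simp add: abs_divide pos_le_divide_eq)
  then show ?thesis unfolding W_eq using dpos w_mono[of c "\<bar>(x - y) / \<delta>\<bar>"] assms
    by (simp add: divide_right_mono)
qed

lemma W_reflect: "W (1 - x) (1 - y) = W x y"
  unfolding W_eq by (simp add: abs_minus_commute)

lemma b_left_eq: assumes "0 < x" "x < \<delta>"
  shows "b x = 2 / (x + \<delta>)^2 * (\<integral>y. indicator {x-\<delta>..0} y * ((x - y) * W x y) \<partial>lborel)"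
  using assms interval_integral_Icc[of "x-\<delta>" 0 "\<lambda>y. (x-y)*W x y"]
  by (simp add: b_d_def zero_ereal_def set_lebesgue_integral_def)

lemma b_right_eq: assumes "1 - \<delta> < x" "x < 1"
  shows "b x = 2 / (1 - x + \<delta>)^2 * (\<integral>y. indicator {1..x+\<delta>} y * ((y - x) * W x y) \<partial>lborel)"
  using assms dlt interval_integral_Icc[of 1 "x+\<delta>" "\<lambda>y. (y-x)*W x y"]
  by (simp add: b_d_def one_ereal_def set_lebesgue_integral_def)

lemma b_else: "\<not>(0 < x \<and> x < \<delta>) \<Longrightarrow> \<not>(1 - \<delta> < x \<and> x < 1) \<Longrightarrow> b x = 0"
  by (auto simp: b_d_def)

lemma b_measurable[measurable]: "b \<in> borel_measurable borel"
proof -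
  have eq: "b = (\<lambda>x. if 0 < x \<and> x < \<delta> then 2 / (x + \<delta>)^2 * (\<integral>y. indicator {x-\<delta>..0} y * ((x - y) * W x y) \<partial>lborel)
     else if 1 - \<delta> < x \<and> x < 1 then 2 / (1 - x + \<delta>)^2 * (\<integral>y. indicator {1..x+\<delta>} y * ((y - x) * W x y) \<partial>lborel) else 0)"
    using b_left_eq b_right_eq b_else by (auto simp: fun_eq_iff)
  have m1: "(\<lambda>x. \<integral>y. indicator {x-\<delta>..0} y * ((x - y) * W x y) \<partial>lborel) \<in> borel_measurable lborel"
    by (rule lborel.borel_measurable_lebesgue_integral) (simp add: indicator_def, measurable)
  have m2: "(\<lambda>x. \<integral>y. indicator {1..x+\<delta>} y * ((y - x) * W x y) \<partial>lborel) \<in> borel_measurable lborel"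
    by (rule lborel.borel_measurable_lebesgue_integral) (simp add: indicator_def, measurable)
  show ?thesis unfolding eq using m1 m2 by measurable
qed

lemma dist_W_bound:
  assumes "0 \<le> t" "t \<le> \<delta>"
  shows "\<bar>t * W x y\<bar> \<le> \<delta> * (w 0 / \<delta>^3)"
proof -
  have "t * W x y \<le> \<delta> * (w 0 / \<delta>^3)"
    using assms W_nonneg[of x y] W_le_w0[of x y] dpos by (intro mult_mono) auto
  then show ?thesis using assms W_nonneg[of x y] by (simp add: abs_mult)
qed

lemma b_left_upper: assumes "0 < x" "x < \<delta>"
  shows "b x \<le> w (x/\<delta>) / \<delta>^3 * ((\<delta> - x) / (\<delta> + x))"
proof -
  let ?K = "w (x/\<delta>) / \<delta>^3"
  have "(\<integral>y. indicator {x-\<delta>..0} y * ((x - y) * W x y) \<partial>lborel)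
      \<le> (\<integral>y. indicator {x-\<delta>..0} y * ((x - y) * ?K) \<partial>lborel)"
  proof (rule integral_Icc_mono_bounded[where B="\<delta> * (w 0 / \<delta>^3)" and B'="\<bar>\<delta> * ?K\<bar>"])
    fix y assume y: "y \<in> {x-\<delta>..0}"
    then have xy: "0 \<le> x - y" "x - y \<le> \<delta>" using assms by auto
    show "\<bar>(x - y) * W x y\<bar> \<le> \<delta> * (w 0 / \<delta>^3)"
      using dist_W_bound[OF xy] by simp
    show "\<bar>(x - y) * ?K\<bar> \<le> \<bar>\<delta> * ?K\<bar>"
      unfolding abs_mult using xy by (intro mult_right_mono) auto
    have "W x y \<le> ?K" using W_le_scaled[of "x/\<delta>" x y] xy y assms dpos by simp
    then show "(x - y) * W x y \<le> (x - y) * ?K" by (rule mult_left_mono) (use xy in auto)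
  qed measurable
  also have "\<dots> = ?K * (x*(0-(x-\<delta>)) - (0^2-(x-\<delta>)^2)/2)"
    by (rule integral_Icc_linear) (use assms in auto)
  also have "x*(0-(x-\<delta>)) - (0^2-(x-\<delta>)^2)/2 = (\<delta>^2 - x^2)/2"
    by (simp add: power2_eq_square field_simps)
  finally have I: "(\<integral>y. indicator {x-\<delta>..0} y * ((x - y) * W x y) \<partial>lborel) \<le> ?K * ((\<delta>^2 - x^2)/2)" .
  have "b x \<le> 2 / (x + \<delta>)^2 * (?K * ((\<delta>^2 - x^2)/2))"
    unfolding b_left_eq[OF assms] using I by (rule mult_left_mono) simp
  also have "\<dots> = ?K * ((\<delta> - x) * (\<delta> + x)) / ((\<delta> + x) * (\<delta> + x))"
  proof -
    have e1: "\<delta>^2 - x^2 = (\<delta> - x) * (\<delta> + x)" by (simp add: power2_eq_square algebra_simps)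
    have e2: "(x + \<delta>)^2 = (\<delta> + x) * (\<delta> + x)" by (simp add: power2_eq_square algebra_simps)
    show ?thesis unfolding e1 e2 by simp
  qed
  also have "\<dots> = ?K * ((\<delta> - x) / (\<delta> + x))"
    using assms dpos by simp
  finally show ?thesis .
qed

definition b_min :: real where
  "b_min = w (7/8) / (256 * \<delta>^3)"

lemma b_min_pos: "b_min > 0"
  using w_pos[of "7/8"] dpos by (simp add: b_min_def)

lemma b_left_lower:
  assumes "0 < x" "x \<le> 3*\<delta>/4"
  shows "b_min \<le> b x"
proof -
  let ?K = "w (7/8) / \<delta>^3"
  have x\<delta>: "x < \<delta>" using assms dpos by simp
  have "(\<integral>y. indicator {-\<delta>/8..0} y * ((0 - y) * ?K) \<partial>lborel)
      \<le> (\<integral>y. indicator {x-\<delta>..0} y * ((x - y) * W x y) \<partial>lborel)"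
  proof (rule integral_mono)
    show "integrable lborel (\<lambda>y. indicator {-\<delta>/8..0} y * ((0 - y) * ?K))"
    proof (rule integrable_indicator_Icc_bounded[where B="\<delta> * \<bar>?K\<bar>"])
      fix y assume "y \<in> {-\<delta>/8..0}"
      then have "\<bar>0 - y\<bar> \<le> \<delta>" using dpos by auto
      then show "\<bar>(0 - y) * ?K\<bar> \<le> \<delta> * \<bar>?K\<bar>" unfolding abs_mult by (rule mult_right_mono) simp
    qed measurable
    show "integrable lborel (\<lambda>y. indicator {x-\<delta>..0} y * ((x - y) * W x y))"
    proof (rule integrable_indicator_Icc_bounded[where B="\<delta> * (w 0 / \<delta>^3)"])
      fix y assume y: "y \<in> {x-\<delta>..0}"
      then have xy: "0 \<le> x - y" "x - y \<le> \<delta>" using assms by auto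
      show "\<bar>(x - y) * W x y\<bar> \<le> \<delta> * (w 0 / \<delta>^3)"
        using dist_W_bound[OF xy] by simp
    qed measurable
    fix y
    show "indicator {-\<delta>/8..0} y * ((0 - y) * ?K) \<le> indicator {x-\<delta>..0} y * ((x - y) * W x y)"
    proof (cases "y \<in> {-\<delta>/8..0}")
      case True
      then have xy: "0 \<le> -y" "-y \<le> x - y" "\<bar>x - y\<bar> \<le> 7/8 * \<delta>" using assms by auto
      have "y \<in> {x-\<delta>..0}" using True assms by auto
      moreover have "W x y \<ge> ?K" using W_ge_scaled[OF xy(3)] by simp
      moreover have "?K \<ge> 0" using w_nonneg[of "7/8"] dpos by simp
      ultimately have "(0 - y) * ?K \<le> (x - y) * W x y" using xy by (intro mult_mono) auto
      then show ?thesis using True \<open>y \<in> {x-\<delta>..0}\<close> by simp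
    next
      case False
      then show ?thesis using W_nonneg[of x y] assms by (auto split: split_indicator intro!: mult_nonneg_nonneg)
    qed
  qed
  also have "\<dots> = (b x) * ((x + \<delta>)^2 / 2)"
    unfolding b_left_eq[OF assms(1) x\<delta>] using assms dpos by (simp add: field_simps)
  finally have I: "?K * (\<delta>^2/128) \<le> b x * ((x + \<delta>)^2 / 2)"
    using dpos by (subst (asm) integral_Icc_linear) (auto simp: power2_eq_square field_simps)
  have bnn: "b x \<ge> 0"
  proof -
    have "0 \<le> (\<integral>y. indicator {x-\<delta>..0} y * ((x - y) * W x y) \<partial>lborel)"
      using W_nonneg assms by (intro integral_nonneg_AE always_eventually) (auto split: split_indicator)
    then show ?thesis unfolding b_left_eq[OF assms(1) x\<delta>] by simp
  qed
  have "b x * ((x + \<delta>)^2 / 2) \<le> b x * (2 * \<delta>^2)"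
  proof (rule mult_left_mono[OF _ bnn])
    have "(x + \<delta>)^2 \<le> (2*\<delta>)^2" by (rule power_mono) (use x\<delta> assms in auto)
    then show "(x + \<delta>)^2 / 2 \<le> 2 * \<delta>^2" by (simp add: power2_eq_square)
  qed
  with I have J: "?K * (\<delta>^2/128) \<le> b x * (2 * \<delta>^2)" by linarith
  have "b_min = (?K * (\<delta>^2/128)) / (2*\<delta>^2)"
    using dpos by (simp add: b_min_def field_simps)
  also have "\<dots> \<le> (b x * (2 * \<delta>^2)) / (2*\<delta>^2)"
    by (rule divide_right_mono[OF J]) simp
  also have "\<dots> = b x"
    using dpos by simp
  finally show ?thesis .
qed

lemma b_reflect_left:
  assumes "0 < x" "x < \<delta>"
  shows "b (1 - x) = b x"
proof -
  have r: "1 - \<delta> < 1 - x" "1 - x < 1" using assms by auto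
  have "(\<integral>y. indicator {1..(1-x)+\<delta>} y * ((y - (1-x)) * W (1-x) y) \<partial>lborel)
     = (\<integral>y. indicator {1..(1-x)+\<delta>} (1 - y) * (((1 - y) - (1-x)) * W (1-x) (1 - y)) \<partial>lborel)"
    by (rule lborel_integral_reflect)
  also have "\<dots> = (\<integral>y. indicator {x-\<delta>..0} y * ((x - y) * W x y) \<partial>lborel)"
    by (intro Bochner_Integration.integral_cong) (auto split: split_indicator simp: W_reflect[of x])
  finally show ?thesis
    unfolding b_right_eq[OF r] b_left_eq[OF assms] by simp
qed

lemma b_reflect: "b (1 - x) = b x"
proof -
  consider "0 < x \<and> x < \<delta>" | "1 - \<delta> < x \<and> x < 1" | "\<not>(0 < x \<and> x < \<delta>) \<and> \<not>(1 - \<delta> < x \<and> x < 1)" by blast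
  then show ?thesis
  proof cases
    case 1 then show ?thesis using b_reflect_left by auto
  next
    case 2 then show ?thesis using b_reflect_left[of "1 - x"] by auto
  next
    case 3 then show ?thesis using b_else[of x] b_else[of "1 - x"] by auto
  qed
qed

lemma b_cases:
  assumes "\<And>x. 0 < x \<Longrightarrow> x < \<delta> \<Longrightarrow> P (b x)" "P 0"
  shows "P (b x)"
proof -
  consider "0 < x \<and> x < \<delta>" | "0 < 1 - x \<and> 1 - x < \<delta>" | "\<not>(0 < x \<and> x < \<delta>) \<and> \<not>(1 - \<delta> < x \<and> x < 1)"
    by linarith
  then show ?thesis
  proof cases
    case 2
    then show ?thesis
      using assms(1)[of "1 - x"] b_reflect[of x] by simp
  qed (use assms b_else[of x] in auto)
qed

lemma b_nonneg: "0 \<le> b x"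
proof (rule b_cases)
  show "0 \<le> b x" if "0 < x" "x < \<delta>" for x
  proof -
    have "0 \<le> (\<integral>y. indicator {x-\<delta>..0} y * ((x - y) * W x y) \<partial>lborel)"
      using W_nonneg that by (intro integral_nonneg_AE always_eventually) (auto split: split_indicator)
    then show ?thesis
      unfolding b_left_eq[OF that] by simp
  qed
qed simp

lemma b_le: "b x \<le> w 0 / \<delta>^3"
proof (rule b_cases)
  show "b x \<le> w 0 / \<delta>^3" if "0 < x" "x < \<delta>" for x
  proof -
    have "w (x/\<delta>) / \<delta>^3 * ((\<delta> - x) / (\<delta> + x)) \<le> w 0 / \<delta>^3 * 1"
      using w_mono[of 0 "x/\<delta>"] w_nonneg[of 0] that dpos by (intro mult_mono divide_right_mono) auto
    then show ?thesis
      using b_left_upper[OF that] by simp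
  qed
qed (use w_nonneg[of 0] dpos in simp)

lemma wt_eq: "wt x y = \<bar>W x y - b x * indicator {0<..<\<delta>} \<bar>y - x\<bar>\<bar>"
  by (simp add: wt_d_def)

lemma wt_measurable_pair[measurable]: "(\<lambda>(x,y). wt x y) \<in> borel_measurable (lborel \<Otimes>\<^sub>M lborel)"
  unfolding wt_eq indicator_def by measurable

lemma wt_measurable[measurable]: "wt x \<in> borel_measurable borel"
  unfolding wt_eq indicator_def by measurable

lemma wt_nonneg: "wt x y \<ge> 0"
  by (simp add: wt_eq)

definition wt_max :: real where
  "wt_max = 2 * w 0 / \<delta>^3"

lemma wt_max_nonneg: "0 \<le> wt_max"
  using w_nonneg[of 0] dpos by (simp add: wt_max_def)

lemma wt_le_wt_max: "wt x y \<le> wt_max"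
  using W_nonneg[of x y] W_le_w0[of x y] b_nonneg[of x] b_le[of x]
  by (auto simp: wt_eq wt_max_def split: split_indicator)

lemma wt_reflect: "wt (1 - x) (1 - y) = wt x y"
  by (simp add: wt_eq W_reflect b_reflect abs_minus_commute)

lemma a_eq: "a x = (\<integral>y. W x y \<partial>Om)"
  by (simp add: a_d_def set_integral_eq_integral_Om)

lemma a_reflect: "a (1 - x) = a x"
  unfolding a_eq by (subst integral_Om_reflect) (simp add: W_reflect[of x, simplified])

definition a_max :: real where
  "a_max = w 0 / \<delta>^3"

lemma a_max_pos: "0 < a_max"
  using w_pos[of "1/2"] w_mono[of 0 "1/2"] dpos by (simp add: a_max_def)

lemma a_le_a_max: "a x \<le> a_max"
proof -
  have "a x \<le> (\<integral>y. w 0 / \<delta>^3 \<partial>Om)"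
    unfolding a_eq
    by (rule integral_Om_mono_bounded[where B="w 0 / \<delta>^3" and B'="\<bar>w 0 / \<delta>^3\<bar>"])
       (auto simp: W_nonneg W_le_w0)
  then show ?thesis
    by (simp add: a_max_def)
qed

definition a_min :: real where
  "a_min = w (1/2) / \<delta>^3 * (\<delta>/2)"

lemma a_min_pos: "0 < a_min"
  using w_pos[of "1/2"] dpos by (simp add: a_min_def)

lemma a_ge_a_min_half:
  assumes "0 < x" "x \<le> 1/2"
  shows "a_min \<le> a x"
proof -
  have "(\<integral>y. indicator {x..x+\<delta>/2} y * (w (1/2) / \<delta>^3) \<partial>Om) \<le> a x"
    unfolding a_eq
  proof (rule integral_Om_mono_bounded[where B="\<bar>w (1/2) / \<delta>^3\<bar>" and B'="w 0 / \<delta>^3"])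
    fix y :: real assume "y \<in> {0<..<1}"
    show "indicator {x..x+\<delta>/2} y * (w (1/2) / \<delta>^3) \<le> W x y"
    proof (cases "y \<in> {x..x+\<delta>/2}")
      case True
      then have "\<bar>x - y\<bar> \<le> 1/2 * \<delta>" by auto
      then show ?thesis using W_ge_scaled[of x y "1/2"] True by simp
    qed (simp add: W_nonneg)
  qed (auto simp: W_nonneg W_le_w0 split: split_indicator)
  also have "(\<integral>y. indicator {x..x+\<delta>/2} y * (w (1/2) / \<delta>^3) \<partial>Om) = w (1/2) / \<delta>^3 * (\<delta>/2)"
    using assms dpos dlt by (subst integral_Om_indicator) auto
  finally show ?thesis
    by (simp add: a_min_def)
qed

lemma a_ge_a_min:
  assumes "0 < x" "x < 1"
  shows "a_min \<le> a x"
proof (cases "x \<le> 1/2")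
  case False
  then show ?thesis
    using a_ge_a_min_half[of "1 - x"] a_reflect[of x] assms by simp
qed (use a_ge_a_min_half assms in auto)

definition defect :: "real \<Rightarrow> real" where
  "defect x = a x - (\<integral>y. wt x y \<partial>Om)"

lemma defect_nonneg: "0 < x \<Longrightarrow> x < 1 \<Longrightarrow> defect x \<ge> 0"
  using A2 by (auto simp: defect_def set_integral_eq_integral_Om)

lemma integrable_W: "integrable Om (W x)"
  by (rule integrable_Om_bounded[where B="w 0/\<delta>^3"]) (auto simp: W_nonneg W_le_w0)

lemma integrable_wt: "integrable Om (wt x)"
  by (rule integrable_Om_bounded[where B="wt_max"]) (auto simp: wt_nonneg wt_le_wt_max)

lemma defect_eq_integral: "defect x = (\<integral>y. W x y - wt x y \<partial>Om)"
  unfolding defect_def a_eq by (simp add: Bochner_Integration.integral_diff[OF integrable_W integrable_wt])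

lemma wt_diag: "wt x x = W x x"
  using W_nonneg[of x x] by (simp add: wt_eq)

lemma wt_outside_horizon: "\<delta> \<le> \<bar>x - y\<bar> \<Longrightarrow> wt x y = 0"
  using W_outside_horizon[of x y] by (simp add: wt_eq abs_minus_commute)

lemma wt_inside_horizon: "y \<noteq> x \<Longrightarrow> \<bar>x - y\<bar> < \<delta> \<Longrightarrow> wt x y = \<bar>W x y - b x\<bar>"
  by (simp add: wt_eq abs_minus_commute)

lemma wt_le_W_plus_b: "wt x y \<le> W x y + b x"
  using W_nonneg[of x y] b_nonneg[of x] by (auto simp: wt_eq split: split_indicator)

lemma wt_near_left_boundary:
  assumes "0 < x" "x < \<delta>" "y \<noteq> x" "\<bar>x - y\<bar> \<le> x"
  shows "wt x y = W x y - b x"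
proof -
  have "b x \<le> w (x/\<delta>) / \<delta>^3 * ((\<delta> - x) / (\<delta> + x))"
    by (rule b_left_upper[OF assms(1,2)])
  also have "\<dots> \<le> w (x/\<delta>) / \<delta>^3"
    using assms w_nonneg[of "x/\<delta>"] dpos by (intro mult_left_le) auto
  also have "\<dots> \<le> W x y"
    using W_ge_scaled[of x y "x/\<delta>"] assms dpos by simp
  finally show ?thesis
    using wt_inside_horizon[of y x] assms by simp
qed

text \<open>On \<open>[\<delta>/2, 3\<delta>/4]\<close> the correction \<open>b\<close> is subtracted from \<open>w\<^sub>\<delta>\<close> on \<open>(0, 2x)\<close>,
  which is more than the length \<open>\<delta> - x\<close> on which it can be added.\<close>

lemma defect_seed:
  assumes "\<delta>/2 \<le> x" "x \<le> 3*\<delta>/4"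
  shows "b_min * (\<delta>/2) \<le> defect x"
proof -
  have x: "0 < x" "x < \<delta>" "x + \<delta> < 1"
    using assms dpos dlt by auto
  define g where
    "g y = indicator {0<..<x} y * b x + indicator {x<..<2*x} y * b x - indicator {2*x..x+\<delta>} y * b x"
    for y
  have "(\<integral>y. g y \<partial>Om) \<le> defect x"
    unfolding defect_eq_integral
  proof (rule integral_Om_mono_bounded[where B="b x" and B'="w 0/\<delta>^3 + wt_max"])
    show "\<bar>g y\<bar> \<le> b x" for y
      using b_nonneg[of x] by (auto simp: g_def split: split_indicator)
    show "\<bar>W x y - wt x y\<bar> \<le> w 0/\<delta>^3 + wt_max" for y
      using W_nonneg[of x y] W_le_w0[of x y] wt_nonneg[of x y] wt_le_wt_max[of x y] by linarith
    show "g y \<le> W x y - wt x y" if y: "y \<in> {0<..<1}" for y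
    proof -
      consider "y \<noteq> x" "\<bar>x - y\<bar> \<le> x" | "y = x" | "2*x \<le> y" "y \<le> x + \<delta>" | "x + \<delta> < y"
        using y by (cases "y = x"; cases "y \<le> 2*x"; cases "y \<le> x + \<delta>") (auto simp: abs_if)
      then show ?thesis
      proof cases
        case 1
        then show ?thesis
          using wt_near_left_boundary[OF x(1,2) 1] b_nonneg[of x]
          by (auto simp: g_def split: split_indicator)
      next
        case 2
        then show ?thesis
          using x by (simp add: g_def wt_diag)
      next
        case 3
        then show ?thesis
          using wt_le_W_plus_b[of x y] x by (auto simp: g_def split: split_indicator)
      next
        case 4
        then show ?thesis
          using wt_outside_horizon[of x y] W_nonneg[of x y] x by (simp add: g_def abs_if)
      qed
    qed
  qed (simp_all add: g_def)
  moreover have "(\<integral>y. g y \<partial>Om) = b x * (2 * x - (\<delta> - x))"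
  proof -
    have int: "integrable Om (\<lambda>y. indicator S y * b x)" if "S \<in> sets borel" for S :: "real set"
      by (rule integrable_Om_bounded[where B="\<bar>b x\<bar>"]) (use that in \<open>auto split: split_indicator\<close>)
    have "(\<integral>y. g y \<partial>Om) = (\<integral>y. indicator {0<..<x} y * b x \<partial>Om)
        + (\<integral>y. indicator {x<..<2*x} y * b x \<partial>Om) - (\<integral>y. indicator {2*x..x+\<delta>} y * b x \<partial>Om)"
      unfolding g_def
      by (simp add: Bochner_Integration.integral_diff Bochner_Integration.integral_add
                    int[of "{0<..<x}", simplified] int[of "{x<..<2*x}", simplified]
                    int[of "{2*x..x+\<delta>}", simplified])
    also have "\<dots> = b x * (2 * x - (\<delta> - x))"
      by (subst (1 2 3) integral_Om_indicator) (use x in \<open>auto simp: algebra_simps\<close>)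
    finally show ?thesis .
  qed
  moreover have "b_min * (\<delta>/2) \<le> b x * (2 * x - (\<delta> - x))"
    using b_left_lower[of x] assms x b_min_pos by (intro mult_mono) auto
  ultimately show ?thesis
    by linarith
qed

definition far_wt :: "real \<Rightarrow> real" where
  "far_wt x = (\<integral>y. indicator {x+\<delta>/2..<x+\<delta>} y * wt x y \<partial>Om)"

lemma integrable_indicator_wt: "S \<in> sets borel \<Longrightarrow> integrable Om (\<lambda>y. indicator S y * wt x y)"
  by (rule integrable_Om_bounded[where B="wt_max"])
     (use wt_max_nonneg in \<open>auto simp: wt_nonneg wt_le_wt_max split: split_indicator\<close>)

lemma far_wt_ge_if_W_small:
  assumes "0 < x" "x < \<delta>/2" "2 * (w (1/2) / \<delta>^3) < b x"
  shows "b x * (\<delta>/2) \<le> 2 * far_wt x"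
proof -
  let ?S = "{x+\<delta>/2..<x+\<delta>}"
  have eq: "(\<integral>y. indicator ?S y * b x \<partial>Om) = b x * (\<delta>/2)"
    using assms dlt by (subst integral_Om_indicator) auto
  have "(\<integral>y. indicator ?S y * b x \<partial>Om) \<le> (\<integral>y. 2 * (indicator ?S y * wt x y) \<partial>Om)"
  proof (rule integral_Om_mono_bounded[where B="b x" and B'="2 * wt_max"])
    show "\<bar>indicator ?S y * b x\<bar> \<le> b x" for y
      using b_nonneg[of x] by (auto split: split_indicator)
    show "\<bar>2 * (indicator ?S y * wt x y)\<bar> \<le> 2 * wt_max" for y
      using wt_nonneg[of x y] wt_le_wt_max[of x y] wt_max_nonneg by (auto split: split_indicator)
    show "indicator ?S y * b x \<le> 2 * (indicator ?S y * wt x y)" for y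
    proof (cases "y \<in> ?S")
      case True
      then have "W x y \<le> w (1/2) / \<delta>^3"
        using W_le_scaled[of "1/2" x y] by simp
      moreover have "wt x y = \<bar>W x y - b x\<bar>"
        using True dpos by (intro wt_inside_horizon) auto
      ultimately show ?thesis
        using True assms(3) by (auto simp: abs_if)
    qed simp
  qed measurable
  then show ?thesis
    unfolding eq by (simp add: far_wt_def)
qed

lemma defect_far_wt_ge_if_W_large:
  assumes "0 < x" "x < \<delta>/2" "b x \<le> 2 * (w (1/2) / \<delta>^3)"
  shows "b x * (\<delta>/2) \<le> defect x + 2 * far_wt x"
proof -
  let ?S = "{x+\<delta>/2..<x+\<delta>}"
  have "(\<integral>y. indicator ?S y * b x \<partial>Om) \<le> (\<integral>y. W x y - wt x y + 2 * (indicator ?S y * wt x y) \<partial>Om)"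
  proof (rule integral_Om_mono_bounded[where B="b x" and B'="w 0/\<delta>^3 + 3 * wt_max"])
    show "\<bar>indicator ?S y * b x\<bar> \<le> b x" for y
      using b_nonneg[of x] by (auto split: split_indicator)
    show "\<bar>W x y - wt x y + 2 * (indicator ?S y * wt x y)\<bar> \<le> w 0/\<delta>^3 + 3 * wt_max" for y
      using W_nonneg[of x y] W_le_w0[of x y] wt_nonneg[of x y] wt_le_wt_max[of x y]
      by (auto split: split_indicator)
    fix y :: real assume y: "y \<in> {0<..<1}"
    consider "y \<in> ?S" | "y = x" | "y \<noteq> x" "y < x + \<delta>/2" | "x + \<delta> \<le> y"
      by fastforce
    then show "indicator ?S y * b x \<le> W x y - wt x y + 2 * (indicator ?S y * wt x y)"
    proof cases
      case 1
      then show ?thesis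
        using wt_inside_horizon[of y x] W_nonneg[of x y] dpos by auto
    next
      case 2
      then show ?thesis
        using assms by (simp add: wt_diag)
    next
      case 3
      then have "w (1/2) / \<delta>^3 \<le> W x y" "\<bar>x - y\<bar> < \<delta>"
        using W_ge_scaled[of x y "1/2"] y assms by (auto simp: abs_if)
      then show ?thesis
        using 3 wt_inside_horizon[of y x] assms(3) b_nonneg[of x] by auto
    next
      case 4
      then show ?thesis
        using wt_outside_horizon[of x y] W_outside_horizon[of x y] by simp
    qed
  qed measurable
  also have "\<dots> = defect x + 2 * far_wt x"
    unfolding defect_eq_integral far_wt_def
    by (simp add: Bochner_Integration.integral_diff Bochner_Integration.integral_add
                  integrable_W integrable_wt integrable_indicator_wt)
  also have "(\<integral>y. indicator ?S y * b x \<partial>Om) = b x * (\<delta>/2)"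
    using assms dlt by (subst integral_Om_indicator) auto
  finally show ?thesis .
qed

text \<open>Near the left boundary the defect alone need not be large; what \<open>b\<close> takes
  away from \<open>w\<^sub>\<delta>\<close> close to \<open>x\<close> is either visible in the defect or, if \<open>w\<^sub>\<delta>\<close> is
  already small at distance \<open>\<delta>/2\<close>, reappears as mass of \<open>wt\<close> at that distance.\<close>

lemma defect_far_wt_ge:
  assumes "0 < x" "x < \<delta>/2"
  shows "b x * (\<delta>/2) \<le> defect x + 2 * far_wt x"
proof (cases "b x \<le> 2 * (w (1/2) / \<delta>^3)")
  case False
  then show ?thesis
    using far_wt_ge_if_W_small[OF assms] defect_nonneg[of x] assms dlt by simp
qed (rule defect_far_wt_ge_if_W_large[OF assms])

definition wt_min :: real where
  "wt_min = 2/3 * (w (1/2) / \<delta>^3)"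

lemma wt_min_pos: "0 < wt_min"
  using w_pos[of "1/2"] dpos by (simp add: wt_min_def)

lemma b_le_third:
  assumes "\<delta>/2 \<le> x" "x \<le> 1/2"
  shows "b x \<le> w (1/2) / \<delta>^3 / 3"
proof (cases "x < \<delta>")
  case True
  have "b x \<le> w (x/\<delta>) / \<delta>^3 * ((\<delta> - x) / (\<delta> + x))"
    using True assms dpos by (intro b_left_upper) auto
  also have "\<dots> \<le> w (1/2) / \<delta>^3 * (1/3)"
    using w_mono[of "1/2" "x/\<delta>"] w_nonneg[of "1/2"] assms dpos True
    by (intro mult_mono divide_right_mono) (auto simp: field_simps)
  finally show ?thesis
    by simp
next
  case False
  then show ?thesis
    using b_else[of x] assms dlt w_nonneg[of "1/2"] dpos by simp
qed

lemma wt_ge_wt_min_half: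
  assumes "\<delta>/2 \<le> x" "x \<le> 1/2" "\<bar>x - y\<bar> \<le> \<delta>/2"
  shows "wt_min \<le> wt x y"
proof -
  have "w (1/2) / \<delta>^3 \<le> W x y"
    using W_ge_scaled[of x y "1/2"] assms by simp
  moreover have "0 \<le> w (1/2) / \<delta>^3"
    using w_nonneg[of "1/2"] dpos by simp
  ultimately show ?thesis
    using wt_diag[of x] wt_inside_horizon[of y x] b_le_third[OF assms(1,2)] assms(3) dpos
    by (cases "y = x") (auto simp: wt_min_def)
qed

lemma wt_ge_wt_min:
  assumes "\<delta>/2 \<le> x" "x \<le> 1 - \<delta>/2" "\<bar>x - y\<bar> \<le> \<delta>/2"
  shows "wt_min \<le> wt x y"
proof (cases "x \<le> 1/2")
  case False
  then have "wt_min \<le> wt (1 - x) (1 - y)"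
    using assms by (intro wt_ge_wt_min_half) (auto simp: abs_minus_commute)
  then show ?thesis
    by (simp add: wt_reflect)
qed (use wt_ge_wt_min_half assms in auto)

lemma integrable_wt_mult:
  assumes "L2_borel g"
  shows "integrable Om (\<lambda>y. wt x y * g y)"
proof (rule Bochner_Integration.integrable_bound)
  show "integrable Om (\<lambda>y. wt_max * \<bar>g y\<bar>)" using L2_borel_integrable[OF assms] by auto
  show "(\<lambda>y. wt x y * g y) \<in> borel_measurable Om" using assms
    by (auto simp: L2_borel_def intro!: measurable_restrict_space1)
  show "AE y in Om. norm (wt x y * g y) \<le> norm (wt_max * \<bar>g y\<bar>)"
    using wt_le_wt_max wt_nonneg wt_max_nonneg
    by (intro always_eventually allI) (simp add: abs_mult mult_right_mono)
qed

section \<open>The averaging operator\<close>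

definition T :: "(real \<Rightarrow> real) \<Rightarrow> real \<Rightarrow> real" where
  "T g x = (if x \<in> {0<..<1} then (\<integral>y. wt x y * g y \<partial>Om) / a x else 0)"

lemma a_measurable[measurable]: "a \<in> borel_measurable borel"
proof -
  have "a = (\<lambda>x. \<integral>y. indicator {0<..<1} y * W x y \<partial>lborel)"
    by (simp add: fun_eq_iff a_eq integral_Om_eq_lborel)
  moreover have "(\<lambda>x. \<integral>y. indicator {0<..<1} y * W x y \<partial>lborel) \<in> borel_measurable lborel"
    by (rule lborel.borel_measurable_lebesgue_integral) (simp add: indicator_def, measurable)
  ultimately show ?thesis by simp
qed

lemma T_measurable[measurable]:
  assumes [measurable]: "g \<in> borel_measurable borel"
  shows "T g \<in> borel_measurable borel"
proof -
  have "(\<lambda>x. \<integral>y. indicator {0<..<1} y * (wt x y * g y) \<partial>lborel) \<in> borel_measurable lborel"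
    by (rule lborel.borel_measurable_lebesgue_integral) (simp add: indicator_def, measurable)
  then have "(\<lambda>x. \<integral>y. wt x y * g y \<partial>Om) \<in> borel_measurable borel" by (simp add: integral_Om_eq_lborel)
  then show ?thesis unfolding T_def[abs_def] by measurable
qed

lemma a_pos: "0 < x \<Longrightarrow> x < 1 \<Longrightarrow> a x > 0"
  using a_ge_a_min a_min_pos by fastforce

lemma T_bound:
  assumes "L2_borel g"
  shows "\<bar>T g x\<bar> \<le> wt_max / a_min * (\<integral>y. \<bar>g y\<bar> \<partial>Om)"
proof (cases "x \<in> {0<..<1}")
  case True
  have I0: "(\<integral>y. \<bar>g y\<bar> \<partial>Om) \<ge> 0" by simp
  have "\<bar>\<integral>y. wt x y * g y \<partial>Om\<bar> \<le> (\<integral>y. wt_max * \<bar>g y\<bar> \<partial>Om)"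
    using wt_le_wt_max wt_nonneg wt_max_nonneg L2_borel_integrable[OF assms] integrable_wt_mult[OF assms]
    by (intro integral_abs_bound_integral) (auto simp: abs_mult mult_right_mono)
  also have "\<dots> = wt_max * (\<integral>y. \<bar>g y\<bar> \<partial>Om)" by simp
  finally have N: "\<bar>\<integral>y. wt x y * g y \<partial>Om\<bar> \<le> wt_max * (\<integral>y. \<bar>g y\<bar> \<partial>Om)" .
  have ax: "a x \<ge> a_min" using a_ge_a_min True by auto
  have "\<bar>T g x\<bar> = \<bar>\<integral>y. wt x y * g y \<partial>Om\<bar> / a x"
    using True a_pos[of x] by (simp add: T_def)
  also have "\<dots> \<le> wt_max * (\<integral>y. \<bar>g y\<bar> \<partial>Om) / a_min"
    using N ax a_min_pos wt_max_nonneg I0 by (intro frac_le) auto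
  finally show ?thesis by simp
next
  case False then show ?thesis using wt_max_nonneg a_min_pos by (auto simp: T_def)
qed

lemma bounded_borel_T:
  assumes "L2_borel g"
  shows "bounded_borel (T g)"
  using T_bound[OF assms] assms by (auto simp: bounded_borel_def L2_borel_def)

lemma T_add:
  assumes "L2_borel g" "L2_borel h"
  shows "T (\<lambda>y. g y + h y) x = T g x + T h x"
  using integrable_wt_mult[OF assms(1)] integrable_wt_mult[OF assms(2)]
  by (simp add: T_def distrib_left add_divide_distrib)

lemma T_cmult: "T (\<lambda>y. c * g y) x = c * T g x"
proof -
  have "(\<integral>y. wt x y * (c * g y) \<partial>Om) = c * (\<integral>y. wt x y * g y \<partial>Om)"
    by (subst integral_mult_right_zero[symmetric]) (simp add: ac_simps)
  then show ?thesis by (simp add: T_def)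
qed

lemma T_cong:
  assumes "\<And>y. y \<in> {0<..<1} \<Longrightarrow> g y = h y"
  shows "T g x = T h x"
proof -
  have "(\<integral>y. wt x y * g y \<partial>Om) = (\<integral>y. wt x y * h y \<partial>Om)"
    by (rule Bochner_Integration.integral_cong) (use assms in auto)
  then show ?thesis by (simp add: T_def)
qed

lemma T_mono:
  assumes "L2_borel g" "L2_borel h" "\<And>y. y \<in> {0<..<1} \<Longrightarrow> g y \<le> h y"
  shows "T g x \<le> T h x"
proof (cases "x \<in> {0<..<1}")
  case True
  have "(\<integral>y. wt x y * g y \<partial>Om) \<le> (\<integral>y. wt x y * h y \<partial>Om)"
    using integrable_wt_mult[OF assms(1)] integrable_wt_mult[OF assms(2)] assms(3) wt_nonneg
    by (intro integral_mono) (auto intro: mult_left_mono)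
  then show ?thesis using True a_pos[of x] by (simp add: T_def divide_right_mono)
qed (auto simp: T_def)

lemma T_abs:
  assumes "L2_borel g"
  shows "\<bar>T g x\<bar> \<le> T (\<lambda>y. \<bar>g y\<bar>) x"
proof -
  have "T g x \<le> T (\<lambda>y. \<bar>g y\<bar>) x" by (rule T_mono[OF assms L2_borel_abs[OF assms]]) simp
  moreover have "T (\<lambda>y. -1 * g y) x \<le> T (\<lambda>y. \<bar>g y\<bar>) x"
    by (rule T_mono[OF L2_borel_cmult[OF assms] L2_borel_abs[OF assms]]) simp
  then have "- T g x \<le> T (\<lambda>y. \<bar>g y\<bar>) x" using T_cmult[of "-1" g x] by simp
  ultimately show ?thesis by simp
qed

lemma T_one: "T (\<lambda>_. 1) x \<le> 1"
proof (cases "x \<in> {0<..<1}")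
  case True
  have "(\<integral>y. wt x y \<partial>Om) \<le> a x" using A2 True by (simp add: set_integral_eq_integral_Om)
  then show ?thesis using True a_pos[of x] by (simp add: T_def)
qed (auto simp: T_def)

lemma T_nonneg:
  assumes "L2_borel g" "\<And>y. y \<in> {0<..<1} \<Longrightarrow> g y \<ge> 0"
  shows "T g x \<ge> 0"
proof -
  have "T (\<lambda>_. 0) x \<le> T g x"
    by (rule T_mono[OF bounded_borel_L2_borel[OF bounded_borel_const] assms(1)]) (use assms(2) in auto)
  moreover have "T (\<lambda>_. 0) x = 0" using T_cmult[of 0 "\<lambda>_. 0" x] by simp
  ultimately show ?thesis by simp
qed

lemma T_reflect: "T g (1 - x) = T (\<lambda>y. g (1 - y)) x"
proof -
  have "(\<integral>y. wt (1 - x) y * g y \<partial>Om) = (\<integral>y. wt (1 - x) (1 - y) * g (1 - y) \<partial>Om)"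
    by (rule integral_Om_reflect)
  also have "\<dots> = (\<integral>y. wt x y * g (1 - y) \<partial>Om)" by (simp add: wt_reflect)
  finally show ?thesis by (auto simp: T_def a_reflect)
qed

section \<open>Iterates of the averaging operator on the constant one\<close>

definition iter_one :: "nat \<Rightarrow> real \<Rightarrow> real" where
  "iter_one k = (T ^^ k) (\<lambda>_. 1)"

lemma iter_one_0: "iter_one 0 = (\<lambda>_. 1)"
  by (simp add: iter_one_def)

lemma iter_one_Suc: "iter_one (Suc k) = T (iter_one k)"
  by (simp add: iter_one_def)

lemma bounded_borel_iter_one: "bounded_borel (iter_one k)"
  by (induction k)
     (auto simp: iter_one_0 iter_one_Suc bounded_borel_const intro!: bounded_borel_T bounded_borel_L2_borel)

lemma L2_borel_iter_one: "L2_borel (iter_one k)"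
  by (rule bounded_borel_L2_borel[OF bounded_borel_iter_one])

lemma iter_one_measurable [measurable]: "iter_one k \<in> borel_measurable borel"
  using bounded_borel_iter_one by (simp add: bounded_borel_def)

lemma iter_one_bounds: "x \<in> {0<..<1} \<Longrightarrow> 0 \<le> iter_one k x \<and> iter_one k x \<le> 1"
proof (induction k arbitrary: x)
  case 0
  then show ?case by (simp add: iter_one_0)
next
  case (Suc k)
  have "0 \<le> T (iter_one k) x"
    using Suc.IH by (intro T_nonneg[OF L2_borel_iter_one]) auto
  moreover have "T (iter_one k) x \<le> T (\<lambda>_. 1) x"
    using Suc.IH by (intro T_mono[OF L2_borel_iter_one bounded_borel_L2_borel[OF bounded_borel_const]]) auto
  ultimately show ?case
    using T_one[of x] by (simp add: iter_one_Suc)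
qed

lemma iter_one_Suc_le: "x \<in> {0<..<1} \<Longrightarrow> iter_one (Suc k) x \<le> iter_one k x"
proof (induction k arbitrary: x)
  case 0
  then show ?case using iter_one_bounds[of x 1] by (simp add: iter_one_0)
next
  case (Suc k)
  have "iter_one (Suc (Suc k)) x = T (iter_one (Suc k)) x"
    by (simp add: iter_one_Suc)
  also have "\<dots> \<le> T (iter_one k) x"
    by (rule T_mono[OF L2_borel_iter_one L2_borel_iter_one]) (use Suc.IH in auto)
  finally show ?case
    by (simp add: iter_one_Suc)
qed

lemma iter_one_reflect: "iter_one k (1 - x) = iter_one k x"
proof (induction k arbitrary: x)
  case 0
  then show ?case by (simp add: iter_one_0)
next
  case (Suc k)
  have "iter_one (Suc k) (1 - x) = T (\<lambda>y. iter_one k (1 - y)) x"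
    by (simp add: iter_one_Suc T_reflect)
  also have "(\<lambda>y. iter_one k (1 - y)) = iter_one k"
    using Suc.IH by auto
  finally show ?case
    by (simp add: iter_one_Suc)
qed

lemma iter_one_gap_ge:
  assumes "x \<in> {0<..<1}"
  shows "(defect x + (\<integral>y. wt x y * (1 - iter_one k y) \<partial>Om)) / a_max \<le> 1 - iter_one (Suc k) x"
proof -
  have "(\<integral>y. wt x y * (1 - iter_one k y) \<partial>Om) = (\<integral>y. wt x y \<partial>Om) - (\<integral>y. wt x y * iter_one k y \<partial>Om)"
    using integrable_wt integrable_wt_mult[OF L2_borel_iter_one]
    by (simp add: right_diff_distrib Bochner_Integration.integral_diff)
  then have "1 - iter_one (Suc k) x = (defect x + (\<integral>y. wt x y * (1 - iter_one k y) \<partial>Om)) / a x"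
    using assms a_pos[of x] by (simp add: iter_one_Suc T_def defect_def field_simps)
  moreover have "0 \<le> (\<integral>y. wt x y * (1 - iter_one k y) \<partial>Om)"
    using iter_one_bounds wt_nonneg by (intro integral_nonneg_AE AE_I2) auto
  ultimately show ?thesis
    using assms defect_nonneg[of x] a_pos[of x] a_le_a_max[of x] by (simp add: frac_le)
qed

lemma integral_wt_gap_ge:
  assumes "S \<in> sets borel" "0 \<le> \<eta>" "\<And>y. y \<in> S \<Longrightarrow> y \<in> {0<..<1} \<Longrightarrow> \<eta> \<le> 1 - iter_one k y"
  shows "\<eta> * (\<integral>y. indicator S y * wt x y \<partial>Om) \<le> (\<integral>y. wt x y * (1 - iter_one k y) \<partial>Om)"
proof -
  have "(\<integral>y. \<eta> * (indicator S y * wt x y) \<partial>Om) \<le> (\<integral>y. wt x y * (1 - iter_one k y) \<partial>Om)"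
  proof (rule integral_Om_mono_bounded[where B="\<eta> * wt_max" and B'="wt_max"])
    show "\<bar>\<eta> * (indicator S y * wt x y)\<bar> \<le> \<eta> * wt_max" for y
      using assms(2) wt_nonneg[of x y] wt_le_wt_max[of x y]
      by (auto split: split_indicator intro: mult_left_mono)
    show "\<bar>wt x y * (1 - iter_one k y)\<bar> \<le> wt_max" if "y \<in> {0<..<1}" for y
    proof -
      have "wt x y * (1 - iter_one k y) \<le> wt x y"
        using iter_one_bounds[OF that, of k] wt_nonneg[of x y] by (simp add: mult_left_le)
      then show ?thesis
        using iter_one_bounds[OF that, of k] wt_nonneg[of x y] wt_le_wt_max[of x y] by simp
    qed
    show "\<eta> * (indicator S y * wt x y) \<le> wt x y * (1 - iter_one k y)" if "y \<in> {0<..<1}" for y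
    proof (cases "y \<in> S")
      case True
      then have "wt x y * \<eta> \<le> wt x y * (1 - iter_one k y)"
        using assms(3) that wt_nonneg[of x y] by (intro mult_left_mono) auto
      then show ?thesis
        using True by (simp add: mult.commute)
    qed (use iter_one_bounds[OF that, of k] wt_nonneg[of x y] in simp)
  qed (use assms(1) in measurable)
  then show ?thesis
    by simp
qed

lemma integral_Icc_wt_ge:
  assumes "0 < p" "p \<le> q" "q < 1" "0 \<le> \<kappa>" "\<And>y. y \<in> {p..q} \<Longrightarrow> \<kappa> \<le> wt x y"
  shows "\<kappa> * (q - p) \<le> (\<integral>y. indicator {p..q} y * wt x y \<partial>Om)"
proof -
  have "(\<integral>y. indicator {p..q} y * \<kappa> \<partial>Om) = \<kappa> * (q - p)"
    using assms(1-3) by (subst integral_Om_indicator) auto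
  moreover have "(\<integral>y. indicator {p..q} y * \<kappa> \<partial>Om) \<le> (\<integral>y. indicator {p..q} y * wt x y \<partial>Om)"
    using assms(4,5) wt_nonneg[of x] wt_le_wt_max[of x] wt_max_nonneg
    by (intro integral_Om_mono_bounded[where B=\<kappa> and B'=wt_max])
       (auto split: split_indicator)
  ultimately show ?thesis
    by (simp only:)
qed

definition seed_gap :: real where
  "seed_gap = b_min * (\<delta>/2) / a_max"

definition spread :: real where
  "spread = wt_min * (\<delta>/4) / a_max"

lemma seed_gap_pos: "0 < seed_gap"
  using b_min_pos a_max_pos dpos by (simp add: seed_gap_def)

lemma spread_pos: "0 < spread"
  using wt_min_pos a_max_pos dpos by (simp add: spread_def)

text \<open>Each step of the iteration spreads the gap by \<open>\<delta>/4\<close> to the right, starting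
  from the interval \<open>[\<delta>/2, 3\<delta>/4]\<close> where the defect itself is positive.\<close>

lemma iter_one_gap_spread:
  assumes "\<delta>/2 \<le> x" "x \<le> 1 - \<delta>/2" "x \<le> 3*\<delta>/4 + real k * \<delta>/4"
  shows "seed_gap * spread ^ k \<le> 1 - iter_one (Suc k) x"
  using assms
proof (induction k arbitrary: x)
  case 0
  then have "x \<in> {0<..<1}"
    using dpos by auto
  then have "defect x / a_max \<le> 1 - iter_one (Suc 0) x"
    using iter_one_gap_ge[of x 0] by (simp add: iter_one_0)
  moreover have "b_min * (\<delta>/2) / a_max \<le> defect x / a_max"
    using defect_seed 0 a_max_pos by (intro divide_right_mono) auto
  ultimately show ?case
    by (simp add: seed_gap_def)
next
  case (Suc k)
  have x: "x \<in> {0<..<1}"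
    using Suc.prems dpos by auto
  define m where "m = max (\<delta>/2) (x - \<delta>/2)"
  have "0 \<le> real k * \<delta>" "x \<le> \<delta> + real k * \<delta> / 4"
    using dpos Suc.prems(3) by (simp_all add: ring_distribs add_divide_distrib)
  then have m: "\<delta>/2 \<le> m" "m + \<delta>/4 \<le> 1 - \<delta>/2" "m + \<delta>/4 \<le> 3*\<delta>/4 + real k * \<delta>/4"
    using Suc.prems(1,2) dpos dlt by (auto simp: m_def max_def)
  have near: "\<bar>x - y\<bar> \<le> \<delta>/2" if "y \<in> {m..m + \<delta>/4}" for y
    using that Suc.prems(1) dpos by (auto simp: m_def max_def split: if_splits abs_split)
  have "wt_min * (m + \<delta>/4 - m) \<le> (\<integral>y. indicator {m..m + \<delta>/4} y * wt x y \<partial>Om)"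
    by (rule integral_Icc_wt_ge) (use m near dpos wt_min_pos Suc.prems in \<open>auto intro!: wt_ge_wt_min\<close>)
  then have "seed_gap * spread ^ k * (wt_min * (\<delta>/4))
      \<le> seed_gap * spread ^ k * (\<integral>y. indicator {m..m + \<delta>/4} y * wt x y \<partial>Om)"
    using seed_gap_pos spread_pos by (intro mult_left_mono) auto
  also have "\<dots> \<le> (\<integral>y. wt x y * (1 - iter_one (Suc k) y) \<partial>Om)"
    using m seed_gap_pos spread_pos by (intro integral_wt_gap_ge Suc.IH) auto
  finally have I: "seed_gap * spread ^ k * (wt_min * (\<delta>/4))
      \<le> (\<integral>y. wt x y * (1 - iter_one (Suc k) y) \<partial>Om)" .
  have "seed_gap * spread ^ Suc k = seed_gap * spread ^ k * (wt_min * (\<delta>/4)) / a_max"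
    by (simp add: spread_def)
  also have "\<dots> \<le> (defect x + (\<integral>y. wt x y * (1 - iter_one (Suc k) y) \<partial>Om)) / a_max"
    using I defect_nonneg[of x] x a_max_pos by (intro divide_right_mono) auto
  also have "\<dots> \<le> 1 - iter_one (Suc (Suc k)) x"
    by (rule iter_one_gap_ge[OF x])
  finally show ?case .
qed

definition n_spread :: nat where
  "n_spread = nat \<lceil>4/\<delta>\<rceil>"

definition interior_gap :: real where
  "interior_gap = seed_gap * spread ^ n_spread"

lemma iter_one_interior_gap:
  assumes "\<delta>/2 \<le> x" "x \<le> 1 - \<delta>/2"
  shows "interior_gap \<le> 1 - iter_one (Suc n_spread) x"
proof -
  have "4/\<delta> * \<delta> \<le> real n_spread * \<delta>"
    unfolding n_spread_def using dpos by (intro mult_right_mono) auto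
  then have "x \<le> 3*\<delta>/4 + real n_spread * \<delta>/4"
    using assms dpos by simp
  then show ?thesis
    unfolding interior_gap_def using assms by (rule iter_one_gap_spread[rotated 2])
qed

lemma interior_gap_pos: "0 < interior_gap"
  using seed_gap_pos spread_pos by (simp add: interior_gap_def)

lemma interior_gap_le_1: "interior_gap \<le> 1"
  using iter_one_interior_gap[of "1/2"] iter_one_bounds[of "1/2" "Suc n_spread"] dlt by simp

definition layer_gap :: real where
  "layer_gap = interior_gap * b_min * \<delta> / 4 / a_max"

lemma iter_one_layer_gap:
  assumes "0 < x" "x < \<delta>/2"
  shows "layer_gap \<le> 1 - iter_one (Suc (Suc n_spread)) x"
proof -
  let ?I = "\<integral>y. wt x y * (1 - iter_one (Suc n_spread) y) \<partial>Om"
  have x: "x \<in> {0<..<1}"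
    using assms dlt by auto
  have far: "interior_gap * far_wt x \<le> ?I"
    unfolding far_wt_def using assms dlt interior_gap_pos
    by (intro integral_wt_gap_ge iter_one_interior_gap) auto
  have "b_min * (\<delta>/2) \<le> b x * (\<delta>/2)"
    using b_left_lower[of x] assms dpos by (intro mult_right_mono) auto
  also have "\<dots> \<le> defect x + 2 * far_wt x"
    by (rule defect_far_wt_ge[OF assms])
  finally have "interior_gap * (b_min * (\<delta>/2)) \<le> interior_gap * (defect x + 2 * far_wt x)"
    using interior_gap_pos by (intro mult_left_mono) auto
  also have "\<dots> = interior_gap * defect x + 2 * (interior_gap * far_wt x)"
    by (simp add: algebra_simps)
  also have "\<dots> \<le> 2 * (defect x + ?I)"
    using far interior_gap_le_1 defect_nonneg[of x] x mult_left_le_one_le[of "defect x" interior_gap]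
      interior_gap_pos by simp
  finally have "interior_gap * b_min * \<delta> / 4 \<le> defect x + ?I"
    by simp
  then have "layer_gap \<le> (defect x + ?I) / a_max"
    unfolding layer_gap_def using a_max_pos by (intro divide_right_mono) auto
  also have "\<dots> \<le> 1 - iter_one (Suc (Suc n_spread)) x"
    by (rule iter_one_gap_ge[OF x])
  finally show ?thesis .
qed

definition period :: nat where
  "period = Suc (Suc n_spread)"

definition rate :: real where
  "rate = 1 - min (1/2) (min interior_gap layer_gap)"

lemma rate_bounds: "1/2 \<le> rate" "rate < 1"
  using interior_gap_pos b_min_pos dpos a_max_pos by (auto simp: rate_def layer_gap_def)

lemma period_pos: "0 < period"
  by (simp add: period_def)

lemma iter_one_period_le:
  assumes "x \<in> {0<..<1}"
  shows "iter_one period x \<le> rate"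
proof -
  consider "\<delta>/2 \<le> x \<and> x \<le> 1 - \<delta>/2" | "x < \<delta>/2" | "1 - \<delta>/2 < x"
    by linarith
  then show ?thesis
  proof cases
    case 1
    then have "iter_one period x \<le> 1 - interior_gap"
      using iter_one_Suc_le[of x "Suc n_spread"] iter_one_interior_gap[of x] assms
      by (simp add: period_def)
    then show ?thesis
      by (simp add: rate_def)
  next
    case 2
    then show ?thesis
      using iter_one_layer_gap[of x] assms by (auto simp: rate_def period_def)
  next
    case 3
    then show ?thesis
      using iter_one_layer_gap[of "1 - x"] iter_one_reflect[of period x] assms
      by (auto simp: rate_def period_def)
  qed
qed

section \<open>The Neumann series\<close>

lemma L2_borel_T_pow: "L2_borel g \<Longrightarrow> L2_borel ((T ^^ k) g)"
  by (induction k) (auto intro: bounded_borel_L2_borel bounded_borel_T)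

lemma T_pow_measurable [measurable]: "L2_borel g \<Longrightarrow> (T ^^ k) g \<in> borel_measurable borel"
  using L2_borel_T_pow by (simp add: L2_borel_def)

lemma abs_T_pow_le_iter_one:
  assumes "L2_borel e" "\<And>y. y \<in> {0<..<1} \<Longrightarrow> \<bar>e y\<bar> \<le> N" "x \<in> {0<..<1}"
  shows "\<bar>(T ^^ k) e x\<bar> \<le> N * iter_one k x"
  using assms(3)
proof (induction k arbitrary: x)
  case 0
  then show ?case using assms(2) by (simp add: iter_one_0)
next
  case (Suc k)
  have "\<bar>(T ^^ Suc k) e x\<bar> \<le> T (\<lambda>y. \<bar>(T ^^ k) e y\<bar>) x"
    using T_abs[OF L2_borel_T_pow[OF assms(1)]] by simp
  also have "\<dots> \<le> T (\<lambda>y. N * iter_one k y) x"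
    by (rule T_mono[OF L2_borel_abs[OF L2_borel_T_pow[OF assms(1)]] L2_borel_cmult[OF L2_borel_iter_one]])
       (use Suc.IH in auto)
  also have "\<dots> = N * iter_one (Suc k) x"
    by (simp add: T_cmult iter_one_Suc)
  finally show ?case .
qed

lemma iter_one_le_rate_power: "x \<in> {0<..<1} \<Longrightarrow> iter_one k x \<le> rate ^ (k div period)"
proof (induction k arbitrary: x rule: less_induct)
  case (less k)
  show ?case
  proof (cases "k < period")
    case True
    then show ?thesis using iter_one_bounds[OF less.prems] by simp
  next
    case False
    then obtain j where k: "k = period + j"
      by (metis le_add_diff_inverse not_less)
    have "iter_one k x = (T ^^ period) (iter_one j) x"
      unfolding k iter_one_def by (simp add: funpow_add)
    also have "\<dots> \<le> rate ^ (j div period) * iter_one period x"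
      using abs_T_pow_le_iter_one[OF L2_borel_iter_one _ less.prems, of j "rate ^ (j div period)" period]
        less.IH[of j] iter_one_bounds k period_pos by auto
    also have "\<dots> \<le> rate ^ (j div period) * rate"
      using iter_one_period_le[OF less.prems] rate_bounds by (intro mult_left_mono) auto
    also have "\<dots> = rate ^ (k div period)"
      using k period_pos by simp
    finally show ?thesis .
  qed
qed

lemma abs_T_pow_le:
  assumes "L2_borel e" "\<And>y. y \<in> {0<..<1} \<Longrightarrow> \<bar>e y\<bar> \<le> N" "x \<in> {0<..<1}"
  shows "\<bar>(T ^^ k) e x\<bar> \<le> N * rate ^ (k div period)"
proof -
  have "0 \<le> N"
    using assms(2)[of "1/2"] by auto
  then show ?thesis
    using abs_T_pow_le_iter_one[OF assms] iter_one_le_rate_power[OF assms(3)]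
    by (meson mult_left_mono order_trans)
qed

lemma T_pow_cong:
  assumes "\<And>y. y \<in> {0<..<1} \<Longrightarrow> g y = h y"
  shows "x \<in> {0<..<1} \<Longrightarrow> (T ^^ k) g x = (T ^^ k) h x"
proof (induction k arbitrary: x)
  case (Suc k)
  then show ?case by (simp, intro T_cong) auto
qed (use assms in simp)

lemma T_pow_add:
  assumes "L2_borel g" "L2_borel h"
  shows "(T ^^ k) (\<lambda>y. g y + h y) x = (T ^^ k) g x + (T ^^ k) h x"
proof (induction k arbitrary: x)
  case (Suc k)
  then have "(T ^^ k) (\<lambda>y. g y + h y) = (\<lambda>y. (T ^^ k) g y + (T ^^ k) h y)"
    by (simp add: fun_eq_iff)
  then show ?case
    by (simp add: T_add[OF L2_borel_T_pow[OF assms(1)] L2_borel_T_pow[OF assms(2)]])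
qed simp

lemma fixed_point_expand:
  assumes "L2_borel g" "bounded_borel v" "\<And>x. x \<in> {0<..<1} \<Longrightarrow> v x = g x + T v x" "x \<in> {0<..<1}"
  shows "v x = (\<Sum>i<j. (T ^^ i) g x) + (T ^^ j) v x"
proof (induction j)
  case (Suc j)
  have "(T ^^ j) v x = (T ^^ j) (\<lambda>y. g y + T v y) x"
    by (rule T_pow_cong[OF assms(3,4)])
  also have "\<dots> = (T ^^ j) g x + (T ^^ Suc j) v x"
    using T_pow_add[OF assms(1) bounded_borel_L2_borel[OF bounded_borel_T[OF bounded_borel_L2_borel[OF assms(2)]]]]
    by (simp add: funpow_Suc_right del: funpow.simps)
  finally show ?case
    using Suc.IH by simp
qed simp

text \<open>After \<open>period\<close> steps the contraction \<open>iter_one period \<le> rate\<close> takes over.\<close>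

lemma fixed_point_bound:
  assumes "L2_borel g" "\<And>y. y \<in> {0<..<1} \<Longrightarrow> \<bar>g y\<bar> \<le> G"
    and "bounded_borel v" "\<And>x. x \<in> {0<..<1} \<Longrightarrow> v x = g x + T v x"
    and "x \<in> {0<..<1}"
  shows "\<bar>v x\<bar> \<le> real period * G / (1 - rate)"
proof -
  obtain B where "\<forall>y\<in>{0<..<1}. \<bar>v y\<bar> \<le> B"
    using assms(3) by (auto simp: bounded_borel_def)
  then have bdd: "bdd_above ((\<lambda>x. \<bar>v x\<bar>) ` {0<..<1})"
    by (auto intro!: bdd_aboveI)
  define N where "N = (SUP x\<in>{0<..<1::real}. \<bar>v x\<bar>)"
  have vN: "\<bar>v y\<bar> \<le> N" if "y \<in> {0<..<1}" for y
    unfolding N_def using that bdd by (intro cSup_upper) auto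
  have "\<bar>v y\<bar> \<le> real period * G + rate * N" if y: "y \<in> {0<..<1}" for y
  proof -
    have "\<bar>(T ^^ i) g y\<bar> \<le> G" for i
      using abs_T_pow_le_iter_one[OF assms(1,2) y, of i] iter_one_bounds[OF y, of i] assms(2)[OF y]
      by (smt (verit) mult_left_le)
    then have "(\<Sum>i<period. \<bar>(T ^^ i) g y\<bar>) \<le> real period * G"
      using sum_mono[of "{..<period}" "\<lambda>i. \<bar>(T ^^ i) g y\<bar>" "\<lambda>_. G"] by simp
    then have "\<bar>\<Sum>i<period. (T ^^ i) g y\<bar> \<le> real period * G"
      by (rule order_trans[OF sum_abs])
    moreover have "\<bar>(T ^^ period) v y\<bar> \<le> N * rate"
      using abs_T_pow_le[OF bounded_borel_L2_borel[OF assms(3)] vN y, of period] period_pos by simp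
    moreover have "v y = (\<Sum>i<period. (T ^^ i) g y) + (T ^^ period) v y"
      by (rule fixed_point_expand[OF assms(1,3,4) y])
    ultimately show ?thesis
      by (simp add: mult.commute abs_triangle_ineq order_trans[OF abs_triangle_ineq])
  qed
  then have "N \<le> real period * G + rate * N"
    unfolding N_def by (intro cSup_least) (auto simp: N_def[symmetric])
  then have "N \<le> real period * G / (1 - rate)"
    using rate_bounds by (simp add: pos_le_divide_eq algebra_simps)
  then show ?thesis
    using vN[OF assms(5)] by linarith
qed

lemma T_suminf:
  assumes "\<And>i. L2_borel (f i)" "summable c" "\<And>i y. y \<in> {0<..<1} \<Longrightarrow> \<bar>f i y\<bar> \<le> c i"
  shows "T (\<lambda>y. \<Sum>i. f i y) x = (\<Sum>i. T (f i) x)"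
proof (cases "x \<in> {0<..<1}")
  case True
  have bound: "\<bar>wt x y * f i y\<bar> \<le> wt_max * c i" if "y \<in> {0<..<1}" for i y
    using assms(3)[OF that, of i] wt_nonneg[of x y] wt_le_wt_max[of x y]
    by (simp add: abs_mult mult_mono)
  have int_bound: "(\<integral>y. \<bar>wt x y * f i y\<bar> \<partial>Om) \<le> wt_max * c i" for i
  proof -
    have [measurable]: "f i \<in> borel_measurable borel"
      using assms(1) by (simp add: L2_borel_def)
    have "(\<integral>y. \<bar>wt x y * f i y\<bar> \<partial>Om) \<le> (\<integral>y. wt_max * c i \<partial>Om)"
      by (rule integral_Om_mono_bounded[where B="wt_max * c i" and B'="\<bar>wt_max * c i\<bar>"])
         (use bound in auto)
    then show ?thesis
      by simp
  qed
  have "(\<integral>y. wt x y * (\<Sum>i. f i y) \<partial>Om) = (\<integral>y. (\<Sum>i. wt x y * f i y) \<partial>Om)"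
  proof (rule Bochner_Integration.integral_cong[OF refl])
    fix y assume "y \<in> space Om"
    then have "summable (\<lambda>i. f i y)"
      by (intro summable_comparison_test'[OF assms(2)]) (simp add: assms(3))
    then show "wt x y * (\<Sum>i. f i y) = (\<Sum>i. wt x y * f i y)"
      by (rule suminf_mult[symmetric])
  qed
  also have "\<dots> = (\<Sum>i. (\<integral>y. wt x y * f i y \<partial>Om))"
  proof (rule integral_suminf)
    show "integrable Om (\<lambda>y. wt x y * f i y)" for i
      by (rule integrable_wt_mult[OF assms(1)])
    show "AE y in Om. summable (\<lambda>i. norm (wt x y * f i y))"
    proof (rule AE_I2)
      fix y assume "y \<in> space Om"
      then show "summable (\<lambda>i. norm (wt x y * f i y))"
        by (intro summable_comparison_test'[OF summable_mult[OF assms(2), of wt_max]]) (simp add: bound)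
    qed
    show "summable (\<lambda>i. \<integral>y. norm (wt x y * f i y) \<partial>Om)"
      by (intro summable_comparison_test'[OF summable_mult[OF assms(2), of wt_max]]) (simp add: int_bound)
  qed
  finally have "T (\<lambda>y. \<Sum>i. f i y) x = (\<Sum>i. (\<integral>y. wt x y * f i y \<partial>Om)) / a x"
    using True by (simp add: T_def)
  also have "\<dots> = (\<Sum>i. (\<integral>y. wt x y * f i y \<partial>Om) / a x)"
  proof (rule suminf_divide[symmetric], rule summable_comparison_test'[OF summable_mult[OF assms(2), of wt_max]])
    show "norm (\<integral>y. wt x y * f i y \<partial>Om) \<le> wt_max * c i" for i
      using order_trans[OF integral_abs_bound int_bound[of i]] by simp
  qed
  finally show ?thesis
    using True by (simp add: T_def)
qed (auto simp: T_def)

lemma fixed_point_exists: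
  assumes "L2_borel g" "\<And>y. y \<in> {0<..<1} \<Longrightarrow> \<bar>g y\<bar> \<le> G"
  obtains v where "bounded_borel v" "\<And>x. x \<in> {0<..<1} \<Longrightarrow> v x = g x + T v x"
proof -
  have summable: "summable (\<lambda>i. G * rate ^ (i div period))"
    using summable_power_div[OF period_pos rate_bounds] by (rule summable_mult)
  have bound: "\<bar>(T ^^ i) g y\<bar> \<le> G * rate ^ (i div period)" if "y \<in> {0<..<1}" for i y
    by (rule abs_T_pow_le[OF assms that])
  have summable_abs: "summable (\<lambda>i. \<bar>(T ^^ i) g y\<bar>)" if "y \<in> {0<..<1}" for y
    by (rule summable_comparison_test'[OF summable]) (use bound[OF that] in simp)
  have summable_at: "summable (\<lambda>i. (T ^^ i) g y)" if "y \<in> {0<..<1}" for y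
    using summable_abs[OF that] by (rule summable_rabs_cancel)
  define v where "v x = (if x \<in> {0<..<1} then (\<Sum>i. (T ^^ i) g x) else 0)" for x
  have "\<bar>v x\<bar> \<le> (\<Sum>i. G * rate ^ (i div period))" if x: "x \<in> {0<..<1}" for x
  proof -
    have "\<bar>v x\<bar> \<le> (\<Sum>i. \<bar>(T ^^ i) g x\<bar>)"
      using x summable_rabs[OF summable_abs[OF x]] by (simp add: v_def)
    also have "\<dots> \<le> (\<Sum>i. G * rate ^ (i div period))"
      by (rule suminf_le[OF bound[OF x] summable_abs[OF x] summable])
    finally show ?thesis .
  qed
  moreover have "v \<in> borel_measurable borel"
    using T_pow_measurable[OF assms(1)] unfolding v_def by measurable
  ultimately have "bounded_borel v"
    unfolding bounded_borel_def by blast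
  moreover have "v x = g x + T v x" if x: "x \<in> {0<..<1}" for x
  proof -
    have "T v x = T (\<lambda>y. \<Sum>i. (T ^^ i) g y) x"
      by (rule T_cong) (simp add: v_def)
    also have "\<dots> = (\<Sum>i. (T ^^ Suc i) g x)"
      using T_suminf[of "\<lambda>i. (T ^^ i) g", OF L2_borel_T_pow[OF assms(1)] summable bound] by simp
    also have "\<dots> = (\<Sum>i. (T ^^ i) g x) - g x"
      using suminf_split_head[OF summable_at[OF x]] by simp
    finally show ?thesis
      using x by (simp add: v_def)
  qed
  ultimately show ?thesis
    by (rule that)
qed

lemma a_nonneg: "0 \<le> a x"
  unfolding a_eq using W_nonneg by (intro integral_nonneg_AE AE_I2) auto

lemma Pt_eq:
  assumes "\<And>y. y \<in> {0<..<1} \<Longrightarrow> h y = u y" "x \<in> {0<..<1}"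
  shows "Pt w \<delta> u x = a x * (h x - T h x)"
proof -
  have "(LINT y:{0<..<1}|lborel. u y * wt x y) = (\<integral>y. wt x y * h y \<partial>Om)"
    unfolding set_integral_eq_integral_Om by (rule Bochner_Integration.integral_cong) (use assms in auto)
  also have "\<dots> = a x * T h x"
    using assms(2) a_pos[of x] by (simp add: T_def)
  finally show ?thesis
    using assms by (simp add: Pt_def algebra_simps)
qed

lemma L2_borel_mult_a: "L2_borel h \<Longrightarrow> L2_borel (\<lambda>x. a x * h x)"
  using a_nonneg a_le_a_max by (intro L2_borel_mult_bounded[where C=a_max]) auto

lemma L2_borel_divide_a:
  assumes "L2_borel p"
  shows "L2_borel (\<lambda>x. p x / a x)"
proof -
  have "L2_borel (\<lambda>x. 1 / a x * p x)"
  proof (rule L2_borel_mult_bounded[OF assms, where C="1 / a_min"])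
    show "\<bar>1 / a y\<bar> \<le> 1 / a_min" if "y \<in> {0<..<1}" for y
      using a_ge_a_min[of y] a_min_pos that by (simp add: frac_le)
  qed measurable
  then show ?thesis
    by simp
qed

lemma Pt_L2:
  assumes "L2 u"
  shows "L2 (Pt w \<delta> u)"
proof -
  obtain h where h: "L2_borel h" "\<And>y. y \<in> {0<..<1} \<Longrightarrow> h y = u y"
    using L2_borel_representative[OF assms] by blast
  show ?thesis
    using Pt_eq[OF h(2)]
    by (intro L2_if_L2_borel_on_Om[OF L2_borel_mult_a[OF L2_borel_diff[OF h(1)
          bounded_borel_L2_borel[OF bounded_borel_T[OF h(1)]]]]])
qed

lemma Pt_surjective:
  assumes "L2 f"
  shows "\<exists>u. L2 u \<and> (AE x in Om. Pt w \<delta> u x = f x)"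
proof -
  obtain h where h: "L2_borel h" "\<And>y. y \<in> {0<..<1} \<Longrightarrow> h y = f y"
    using L2_borel_representative[OF assms] by blast
  define \<phi> where "\<phi> x = h x / a x" for x
  have \<phi>: "L2_borel \<phi>"
    unfolding \<phi>_def by (rule L2_borel_divide_a[OF h(1)])
  obtain G where "\<forall>y\<in>{0<..<1}. \<bar>T \<phi> y\<bar> \<le> G"
    using bounded_borel_T[OF \<phi>] by (auto simp: bounded_borel_def)
  then obtain v where v: "bounded_borel v" "\<And>x. x \<in> {0<..<1} \<Longrightarrow> v x = T \<phi> x + T v x"
    using fixed_point_exists[OF bounded_borel_L2_borel[OF bounded_borel_T[OF \<phi>]]] by blast
  define u where "u x = \<phi> x + v x" for x
  have u: "L2_borel u"
    unfolding u_def by (rule L2_borel_add[OF \<phi> bounded_borel_L2_borel[OF v(1)]])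
  have "Pt w \<delta> u x = f x" if x: "x \<in> {0<..<1}" for x
  proof -
    have "T u x = v x"
      unfolding u_def using T_add[OF \<phi> bounded_borel_L2_borel[OF v(1)]] v(2)[OF x] by simp
    then show ?thesis
      using Pt_eq[of u u, OF refl x] a_pos[of x] x h(2)[OF x] by (simp add: u_def \<phi>_def)
  qed
  then show ?thesis
    using L2_if_L2_borel_on_Om[OF u, of u] by (intro exI[of _ u]) (auto intro: AE_I2)
qed

lemma abs_T_le_L2:
  assumes "L2_borel \<phi>"
  shows "\<bar>T \<phi> x\<bar> \<le> wt_max / a_min * sqrt (\<integral>y. (\<phi> y)\<^sup>2 \<partial>Om)"
  using T_bound[OF assms, of x] integral_abs_le_sqrt_integral_square[OF assms] wt_max_nonneg a_min_pos
  by (meson divide_nonneg_pos mult_left_mono order_trans)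

definition sup_const :: real where
  "sup_const = real period * wt_max / (a_min\<^sup>2 * (1 - rate))"

definition stability_const :: real where
  "stability_const = sqrt (2 / a_min\<^sup>2 + 2 * sup_const\<^sup>2)"

lemma Pt_stability:
  assumes "L2 u"
  shows "L2norm u \<le> stability_const * L2norm (Pt w \<delta> u)"
proof -
  obtain h where h: "L2_borel h" "\<And>y. y \<in> {0<..<1} \<Longrightarrow> h y = u y"
    using L2_borel_representative[OF assms] by blast
  define \<phi> where "\<phi> x = h x - T h x" for x
  define v where "v = T h"
  define Np where "Np = L2norm (Pt w \<delta> u)"
  have \<phi>: "L2_borel \<phi>"
    unfolding \<phi>_def by (rule L2_borel_diff[OF h(1) bounded_borel_L2_borel[OF bounded_borel_T[OF h(1)]]])
  have v: "bounded_borel v"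
    unfolding v_def by (rule bounded_borel_T[OF h(1)])
  have \<phi>_le: "\<bar>\<phi> y\<bar> \<le> \<bar>Pt w \<delta> u y\<bar> / a_min" if "y \<in> {0<..<1}" for y
  proof -
    have "a_min * \<bar>\<phi> y\<bar> \<le> a y * \<bar>\<phi> y\<bar>"
      using a_ge_a_min[of y] that by (intro mult_right_mono) auto
    also have "\<dots> = \<bar>Pt w \<delta> u y\<bar>"
      using Pt_eq[of h u y] h(2) that a_nonneg[of y] by (simp add: \<phi>_def abs_mult)
    finally show ?thesis
      using a_min_pos by (simp add: field_simps)
  qed
  have "(\<integral>y. (\<phi> y)\<^sup>2 \<partial>Om) \<le> (\<integral>y. (Pt w \<delta> u y)\<^sup>2 / a_min\<^sup>2 \<partial>Om)"
  proof (rule integral_mono)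
    show "integrable Om (\<lambda>y. (Pt w \<delta> u y)\<^sup>2 / a_min\<^sup>2)"
      using Pt_L2[OF assms] by (simp add: L2_def)
    show "(\<phi> y)\<^sup>2 \<le> (Pt w \<delta> u y)\<^sup>2 / a_min\<^sup>2" if "y \<in> space Om" for y
      using power_mono[OF \<phi>_le, of y 2] that by (simp add: power_divide)
  qed (use \<phi> in \<open>simp add: L2_borel_def\<close>)
  then have \<phi>_L2: "(\<integral>y. (\<phi> y)\<^sup>2 \<partial>Om) \<le> Np\<^sup>2 / a_min\<^sup>2"
    by (simp add: Np_def L2norm_def)
  have "0 \<le> Np"
    by (simp add: Np_def L2norm_def)
  then have "sqrt (\<integral>y. (\<phi> y)\<^sup>2 \<partial>Om) \<le> Np / a_min"
    using real_sqrt_le_mono[OF \<phi>_L2] a_min_pos by (simp add: real_sqrt_divide)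
  then have "\<bar>T \<phi> y\<bar> \<le> wt_max / a_min * (Np / a_min)" for y
    using abs_T_le_L2[OF \<phi>, of y] wt_max_nonneg a_min_pos
    by (meson divide_nonneg_pos mult_left_mono order_trans)
  moreover have "v x = T \<phi> x + T v x" for x
  proof -
    have "v x = T (\<lambda>y. \<phi> y + v y) x"
      by (simp add: \<phi>_def v_def)
    then show ?thesis
      using T_add[OF \<phi> bounded_borel_L2_borel[OF v]] by simp
  qed
  ultimately have "\<bar>v x\<bar> \<le> real period * (wt_max / a_min * (Np / a_min)) / (1 - rate)"
    if "x \<in> {0<..<1}" for x
    using that by (intro fixed_point_bound[OF bounded_borel_L2_borel[OF bounded_borel_T[OF \<phi>]] _ v])
  moreover have "real period * (wt_max / a_min * (Np / a_min)) / (1 - rate) = sup_const * Np"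
    by (simp add: sup_const_def power2_eq_square)
  ultimately have v_le: "\<bar>v x\<bar> \<le> sup_const * Np" if "x \<in> {0<..<1}" for x
    using that by simp
  have "(\<integral>y. (h y)\<^sup>2 \<partial>Om) \<le> (\<integral>y. 2 * (\<phi> y)\<^sup>2 + 2 * (sup_const * Np)\<^sup>2 \<partial>Om)"
  proof (rule integral_mono)
    show "(h y)\<^sup>2 \<le> 2 * (\<phi> y)\<^sup>2 + 2 * (sup_const * Np)\<^sup>2" if "y \<in> space Om" for y
      using power2_sum_le[of "\<phi> y" "v y"] power_mono[OF v_le, of y 2] that
      by (simp add: \<phi>_def v_def)
  qed (use h(1) \<phi> in \<open>auto simp: L2_borel_def\<close>)
  also have "\<dots> = 2 * (\<integral>y. (\<phi> y)\<^sup>2 \<partial>Om) + 2 * (sup_const * Np)\<^sup>2"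
    using \<phi> by (simp add: L2_borel_def)
  also have "\<dots> \<le> 2 * (Np\<^sup>2 / a_min\<^sup>2) + 2 * (sup_const * Np)\<^sup>2"
    using \<phi>_L2 by simp
  also have "\<dots> = (2 / a_min\<^sup>2 + 2 * sup_const\<^sup>2) * Np\<^sup>2"
    by (simp add: power_mult_distrib algebra_simps)
  also have "\<dots> = stability_const\<^sup>2 * Np\<^sup>2"
    by (simp add: stability_const_def)
  finally have "sqrt (\<integral>y. (h y)\<^sup>2 \<partial>Om) \<le> sqrt (stability_const\<^sup>2 * Np\<^sup>2)"
    by (rule real_sqrt_le_mono)
  also have "\<dots> = stability_const * Np"
    using \<open>0 \<le> Np\<close> by (simp add: real_sqrt_mult stability_const_def)
  finally show ?thesis
    using L2norm_cong[OF h(2)] by (simp add: Np_def L2norm_def)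
qed

lemma stability_const_pos: "0 < stability_const"
  using a_min_pos by (simp add: stability_const_def add_pos_nonneg)

lemma Pt_injective:
  assumes "L2 u" "AE x in Om. Pt w \<delta> u x = 0"
  shows "AE x in Om. u x = 0"
proof -
  have "(\<integral>x. (Pt w \<delta> u x)\<^sup>2 \<partial>Om) = 0"
    using assms(2) by (simp add: integral_eq_zero_AE eventually_mono)
  then have "(\<integral>x. (u x)\<^sup>2 \<partial>Om) \<le> 0"
    using Pt_stability[OF assms(1)] by (simp add: L2norm_def)
  then have "(\<integral>x. (u x)\<^sup>2 \<partial>Om) = 0"
    by (simp add: antisym integral_nonneg_AE)
  moreover have "integrable Om (\<lambda>x. (u x)\<^sup>2)"
    using assms(1) by (simp add: L2_def)
  ultimately have "AE x in Om. (u x)\<^sup>2 = 0"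
    using integral_nonneg_eq_0_iff_AE[of Om "\<lambda>x. (u x)\<^sup>2"] by simp
  then show ?thesis
    by (auto elim: eventually_mono)
qed

end

theorem mainTheorem1:
  fixes w :: "real \<Rightarrow> real" and \<delta> :: real
  assumes A1: "A1 w"
    and delta: "0 < \<delta>" "\<delta> < 1/2"
    and A2: "\<forall>x\<in>{0<..<1}. a_d w \<delta> x \<ge> (LINT y:{0<..<1}|lborel. wt_d w \<delta> x y)"
  shows "(\<forall>u. L2 u \<longrightarrow> L2 (Pt w \<delta> u))
       \<and> (\<forall>f. L2 f \<longrightarrow> (\<exists>u. L2 u \<and> (AE x in Om. Pt w \<delta> u x = f x)))
       \<and> (\<forall>u. L2 u \<longrightarrow> (AE x in Om. Pt w \<delta> u x = 0) \<longrightarrow> (AE x in Om. u x = 0))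
       \<and> (\<exists>C>0. \<forall>u. L2 u \<longrightarrow> L2norm u \<le> C * L2norm (Pt w \<delta> u))"
proof -
  interpret nonlocal_comparison w \<delta>
    using assms by unfold_locales auto
  show ?thesis
    using Pt_L2 Pt_surjective Pt_injective Pt_stability stability_const_pos by blast
qed

end
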